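(* Let $1<a_1<a_2$ be coprime integers and let $S=\langle a_1,a_2\rangle=\{\lambda_1a_1+\lambda_2a_2:\lambda_1,\lambda_2\in\mathbb{N}_0\}$. Let $\mathcal{P}\subseteq(1,\infty)$ be the set of perspicacious parameters $t$ for $S$, and let $r_0^{-1}(\mathbb{Q})=\{t\in[1,\infty]: r_0(t)\in\mathbb{Q}\}$. Then $\mathcal{P}\subseteq r_0^{-1}(\mathbb{Q})$, $\mathcal{P}$ is countable, and there exists $T$ such that $\mathcal{P}$ is dense in the ray $(T,\infty)$, i.e. $(T,\infty)$ is contained in the closure of $\mathcal{P}$.
   Context: For $t\in[1,\infty)$ and $(u,v)\in\mathbb{R}^2$, $\|(u,v)\|_t=(|u|^t+|v|^t)^{1/t}$, and $\|(u,v)\|_\infty=\max(|u|,|v|)$. For $x\in S$, the factorization set is $Z(x)=\{(m,n)\in\mathbb{N}_0^2: ma_1+na_2=x\}$ (a finite set), the $t$-length set is $\mathscr{L}_t(x)=\{\|f\|_t: f\in Z(x)\}$, $\Delta_t(x)$ is the set of differences between consecutive elements of $\mathscr{L}_t(x)$ (listed in increasing order), and $\Delta_t(S)=\bigcup_{x\in S}\Delta_t(x)$. A parameter $t\in(1,\infty)$ is called dull if $\Delta_t(S)$ is dense in $[0,a_2]$ (i.e. $[0,a_2]$ is contained in the closure of $\Delta_t(S)$), and perspicacious otherwise. Define $\mu(r,t)=\left\|\left(\frac{1-r}{a_1},\frac{r}{a_2}\right)\right\|_t$ for $r\in[0,1]$, $t\in[1,\infty]$, write $\mu_t(r)=\mu(r,t)$,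 and set $r_0(t)=\min\{r\in[0,1]:\mu_t(r)=\frac{1}{a_2}\}$. *)

theory Defs
  imports "HOL-Analysis.Analysis"
begin

definition tnorm :: "real \<Rightarrow> real \<times> real \<Rightarrow> real" where
  "tnorm t p = (\<bar>fst p\<bar> powr t + \<bar>snd p\<bar> powr t) powr (1 / t)"

definition semigrp :: "nat \<Rightarrow> nat \<Rightarrow> nat set" where
  "semigrp a1 a2 = {x. \<exists>m n. x = m * a1 + n * a2}"

definition factorizations :: "nat \<Rightarrow> nat \<Rightarrow> nat \<Rightarrow> (nat \<times> nat) set" where
  "factorizations a1 a2 x = {(m, n). m * a1 + n * a2 = x}"

definition tlengths :: "nat \<Rightarrow> nat \<Rightarrow> real \<Rightarrow> nat \<Rightarrow> real set" where
  "tlengths a1 a2 t x = (\<lambda>(m, n). tnorm t (real m, real n)) ` factorizations a1 a2 x"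

definition consec_diffs :: "real set \<Rightarrow> real set" where
  "consec_diffs L = {b - a | a b. a \<in> L \<and> b \<in> L \<and> a < b \<and> \<not> (\<exists>c\<in>L. a < c \<and> c < b)}"

definition delta_t :: "nat \<Rightarrow> nat \<Rightarrow> real \<Rightarrow> nat \<Rightarrow> real set" where
  "delta_t a1 a2 t x = consec_diffs (tlengths a1 a2 t x)"

definition delta_t_S :: "nat \<Rightarrow> nat \<Rightarrow> real \<Rightarrow> real set" where
  "delta_t_S a1 a2 t = (\<Union>x\<in>semigrp a1 a2. delta_t a1 a2 t x)"

definition dull :: "nat \<Rightarrow> nat \<Rightarrow> real \<Rightarrow> bool" where
  "dull a1 a2 t \<longleftrightarrow> {0..real a2} \<subseteq> closure (delta_t_S a1 a2 t)"

definition perspicacious :: "nat \<Rightarrow> nat \<Rightarrow> real \<Rightarrow> bool" where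
  "perspicacious a1 a2 t \<longleftrightarrow> 1 < t \<and> \<not> dull a1 a2 t"

definition mu :: "nat \<Rightarrow> nat \<Rightarrow> real \<Rightarrow> real \<Rightarrow> real" where
  "mu a1 a2 r t = tnorm t ((1 - r) / real a1, r / real a2)"

definition r0 :: "nat \<Rightarrow> nat \<Rightarrow> real \<Rightarrow> real" where
  "r0 a1 a2 t = (LEAST r. r \<in> {0..1} \<and> mu a1 a2 r t = 1 / real a2)"

end

theory Submission
  imports Defs
begin

(* Encode a factorization (m, n) of x by its share r = n a2 / x in [0, 1]; its t-length is
   x \<mu>(r), where \<mu> = \<mu>\<^sub>t is strictly convex with \<mu>(0) = 1/a1 > \<mu>(1) = 1/a2, and by coprimality
   the shares of x form an arithmetic progression of step a1 a2 / x.  Consecutive t-lengths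
   therefore differ by at most a1, or come from neighbouring shares below \<rho> = r0(t) and differ
   by at least \<sigma> = a1 a2 |\<mu>'(\<rho>)|, or are a length near the level x / a2 and the longest length.  For x = a1 a2 N the shares are the
   grid {k / N}: the second kind of gap fills [\<sigma>, a2], and for irrational \<rho> Kronecker's theorem
   makes the third kind fill [0, \<sigma>], so t is dull.  For \<rho> = p / q the third kind accumulates
   only at finitely many values, which leaves a gap-free interval in (a1, \<sigma>) once \<sigma> > a1.
   Since r0 is continuous and strictly decreasing in t, perspicacious parameters inject into
   the rationals, and as \<sigma> > a1 for large t, rational values of r0 give them densely. *)

section \<open>Norms, fractional parts and factorizations\<close>

lemma tnorm_scale:
  assumes "0 < t"
  shows "tnorm t (a * u, a * v) = \<bar>a\<bar> * tnorm t (u, v)"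
  using assms by (simp add: tnorm_def abs_mult powr_mult distrib_left[symmetric] powr_powr)

lemma tnorm_less_one_iff:
  assumes "0 < t"
  shows "tnorm t p < 1 \<longleftrightarrow> \<bar>fst p\<bar> powr t + \<bar>snd p\<bar> powr t < 1"
proof -
  let ?S = "\<bar>fst p\<bar> powr t + \<bar>snd p\<bar> powr t"
  have "?S powr (1/t) < 1" if "?S < 1"
    using powr_less_mono2[of "1/t" ?S 1] that assms by simp
  moreover have "1 \<le> ?S powr (1/t)" if "1 \<le> ?S"
    using powr_mono2[of "1/t" 1 ?S] that assms by simp
  ultimately show ?thesis unfolding tnorm_def by (meson not_less)
qed

lemma tnorm_eq_one_iff:
  assumes "0 < t"
  shows "tnorm t p = 1 \<longleftrightarrow> \<bar>fst p\<bar> powr t + \<bar>snd p\<bar> powr t = 1"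
proof -
  let ?S = "\<bar>fst p\<bar> powr t + \<bar>snd p\<bar> powr t"
  have "tnorm t p powr t = ?S"
    using assms by (simp add: tnorm_def powr_powr)
  then show ?thesis unfolding tnorm_def by auto
qed

lemma tnorm_bounds:
  fixes m n t :: real
  assumes "0 \<le> m" "0 < n" "1 \<le> t"
  shows "n \<le> tnorm t (m, n)" "tnorm t (m, n) \<le> n + m powr t / n powr (t - 1)"
proof -
  have "n = (n powr t) powr (1/t)" using assms by (simp add: powr_powr)
  also have "\<dots> \<le> (m powr t + n powr t) powr (1/t)" using assms by (intro powr_mono2) auto
  finally show "n \<le> tnorm t (m, n)" unfolding tnorm_def using assms by simp
  define y where "y = (m / n) powr t"
  have y0: "0 \<le> y" unfolding y_def by simp
  have "m powr t + n powr t = n powr t * (1 + y)"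
    unfolding y_def using assms by (simp add: powr_divide field_simps)
  then have "tnorm t (m, n) = n * (1 + y) powr (1/t)"
    unfolding tnorm_def using assms y0 by (simp add: powr_mult powr_powr)
  also have "\<dots> \<le> n * (1 + y)"
    using powr_mono[of "1/t" 1 "1 + y"] y0 assms by (intro mult_left_mono) auto
  also have "\<dots> = n + m powr t / n powr (t - 1)"
    unfolding y_def using assms by (simp add: powr_divide powr_diff field_simps)
  finally show "tnorm t (m, n) \<le> n + m powr t / n powr (t - 1)" .
qed

lemma eventually_div_powr_less:
  fixes c e t :: real
  assumes "1 < t" "0 < e"
  shows "\<exists>N. \<forall>n\<ge>N. c / n powr (t - 1) < e"
proof -
  have "((\<lambda>n::real. c * n powr (1 - t)) \<longlongrightarrow> 0) at_top"
    using assms by (intro tendsto_mult_right_zero tendsto_neg_powr filterlim_ident) auto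
  then have "eventually (\<lambda>n. c * n powr (1 - t) < e) at_top"
    using order_tendstoD(2) assms(2) by blast
  then obtain N where N: "\<And>n. n \<ge> N \<Longrightarrow> c * n powr (1 - t) < e"
    unfolding eventually_at_top_linorder by auto
  have "c / n powr (t - 1) < e" if "n \<ge> N" for n
    using N[OF that] by (metis minus_diff_eq powr_minus_divide times_divide_eq_right mult.right_neutral)
  then show ?thesis by blast
qed

lemma consec_diffs_finite: "finite L \<Longrightarrow> finite (consec_diffs L)"
  by (rule finite_subset[of _ "(\<lambda>(a, b). b - a) ` (L \<times> L)"]) (auto simp: consec_diffs_def)

lemma not_in_closure_if_finite_ball_inter:
  fixes A :: "real set"
  assumes "0 < e" "finite (ball c e \<inter> A)"
  obtains y where "y \<in> ball c e" "y \<notin> closure A"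
proof -
  let ?J = "ball c e - (ball c e \<inter> A)"
  have "open ?J" using assms by (intro open_Diff finite_imp_closed) auto
  have "infinite (ball c e)" using assms by (simp add: ball_eq_greaterThanLessThan)
  then obtain y where "y \<in> ?J" using assms(2) by (metis Diff_infinite_finite ex_in_conv finite.emptyI)
  moreover have "?J \<inter> closure A = {}"
    using \<open>open ?J\<close> open_Int_closure_eq_empty by blast
  ultimately show ?thesis using that by blast
qed

lemma step_crossing:
  fixes R :: "real set" and g :: "real \<Rightarrow> real"
  assumes "finite R" "0 < d"
    and step: "\<And>r r'. r \<in> R \<Longrightarrow> r' \<in> R \<Longrightarrow> r < r' \<Longrightarrow> r + d \<in> R \<and> r + d \<le> r'"
    and "u \<in> R" "w \<in> R" "u \<le> w" "g u < b" "b \<le> g w"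
  obtains r where "r \<in> R" "r + d \<in> R" "u \<le> r" "r + d \<le> w" "g r < b" "b \<le> g (r + d)"
proof -
  define A where "A = {r \<in> R. u \<le> r \<and> r \<le> w \<and> g r < b}"
  have "finite A" "u \<in> A" using assms unfolding A_def by auto
  define r where "r = Max A"
  have "r \<in> A" unfolding r_def using \<open>finite A\<close> \<open>u \<in> A\<close> by (intro Max_in) auto
  have rmax: "\<And>y. y \<in> A \<Longrightarrow> y \<le> r" unfolding r_def using \<open>finite A\<close> by simp
  have "r < w" using \<open>r \<in> A\<close> assms unfolding A_def by force
  then have "r + d \<in> R" "r + d \<le> w" using step[of r w] \<open>r \<in> A\<close> assms unfolding A_def by auto
  moreover have "b \<le> g (r + d)"
    using rmax[of "r + d"] \<open>r \<in> A\<close> \<open>r + d \<in> R\<close> \<open>r + d \<le> w\<close> \<open>0 < d\<close> unfolding A_def by force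
  ultimately show ?thesis using that \<open>r \<in> A\<close> unfolding A_def by auto
qed

lemma frac_mult_approx:
  fixes \<rho> \<theta> \<epsilon> :: real
  assumes "\<rho> \<notin> \<rat>" "0 \<le> \<theta>" "\<theta> \<le> 1" "0 < \<epsilon>" "0 < N0"
  obtains N :: nat where "N0 \<le> N" "0 < frac (real N * \<rho>)" "\<bar>frac (real N * \<rho>) - \<theta>\<bar> < \<epsilon>"
proof -
  have "real N0 * \<rho> \<notin> \<rat>"
    using assms(1,5) Rats_divide[of "real N0 * \<rho>" "real N0"] by auto
  then obtain k where k: "0 < k" "\<bar>frac (real k * (real N0 * \<rho>)) - \<theta>\<bar> < \<epsilon>"
    using Kronecker_approx_1_explicit[of "real N0 * \<rho>" \<theta> \<epsilon>] assms(2-4) by blast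
  have "frac (real (k * N0) * \<rho>) \<noteq> 0"
  proof
    assume "frac (real (k * N0) * \<rho>) = 0"
    then obtain i :: int where "real (k * N0) * \<rho> = of_int i" by (metis frac_eq_0_iff Ints_cases)
    then have "\<rho> = of_int i / real (k * N0)" using \<open>0 < k\<close> assms(5) by (simp add: field_simps)
    then show False using assms(1) by simp
  qed
  then have "0 < frac (real (k * N0) * \<rho>)" using frac_ge_0 by (simp add: less_le)
  moreover have "N0 \<le> k * N0" using k(1) by simp
  moreover have "real (k * N0) * \<rho> = real k * (real N0 * \<rho>)" by simp
  ultimately show ?thesis using that k(2) by metis
qed

lemma near_linear_lower_bound:
  fixes X \<kappa> \<beta> e' a :: real
  assumes "\<bar>X - \<kappa> * \<beta>\<bar> \<le> e' * \<bar>\<kappa>\<bar>" "- a < X" "0 < \<beta>" "e' \<le> \<beta> / 2" "0 \<le> a"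
  shows "- (2 * a / \<beta>) \<le> \<kappa>"
proof (cases "0 \<le> \<kappa>")
  case False
  have "- a < \<kappa> * (\<beta> - e')" using assms(1,2) False by (simp add: algebra_simps abs_if split: if_splits)
  also have "\<dots> \<le> \<kappa> * (\<beta> / 2)" using False assms(4) by (intro mult_left_mono_neg) auto
  finally show ?thesis using assms(3) by (simp add: field_simps)
next
  case True
  moreover have "0 \<le> 2 * a / \<beta>" using assms(3,5) by simp
  ultimately show ?thesis by linarith
qed

lemma finite_factorizations:
  assumes "0 < a1" "0 < a2"
  shows "finite (factorizations a1 a2 x)"
proof -
  have "m \<le> x" "n \<le> x" if "m * a1 + n * a2 = x" for m n
  proof -
    have "m \<le> m * a1" "n \<le> n * a2" using assms by simp_all
    then show "m \<le> x" "n \<le> x" using that by linarith+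
  qed
  then have "factorizations a1 a2 x \<subseteq> {..x} \<times> {..x}" unfolding factorizations_def by auto
  then show ?thesis by (rule finite_subset) simp
qed

text \<open>By coprimality, two factorizations differ by a multiple of the trade \<open>(-a2, +a1)\<close>.\<close>
lemma factorization_trade:
  assumes "coprime a1 a2" "0 < a1" "0 < a2"
    and "(m, n) \<in> factorizations a1 a2 x" "(m', n') \<in> factorizations a1 a2 x" "n < n'"
  shows "(m - a2, n + a1) \<in> factorizations a1 a2 x" "n + a1 \<le> n'" "a2 \<le> m"
proof -
  have e: "m * a1 + n * a2 = m' * a1 + n' * a2" using assms unfolding factorizations_def by auto
  have "m' < m"
  proof (rule ccontr)
    assume "\<not> m' < m"
    then have "m * a1 \<le> m' * a1" by simp
    moreover have "n * a2 < n' * a2" using assms by simp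
    ultimately show False using e by linarith
  qed
  then have e2: "(m - m') * a1 = (n' - n) * a2" using e \<open>n < n'\<close> by (simp add: diff_mult_distrib)
  then have "a1 dvd (n' - n) * a2" by (metis dvd_triv_right)
  then have "a1 dvd n' - n" using assms(1) coprime_dvd_mult_left_iff by blast
  then have "a1 \<le> n' - n" using \<open>n < n'\<close> by (simp add: dvd_imp_le)
  then show "n + a1 \<le> n'" using \<open>n < n'\<close> by linarith
  have "a2 * a1 \<le> (m - m') * a1" using e2 \<open>a1 \<le> n' - n\<close> by (simp add: mult.commute)
  then have "a2 \<le> m - m'" using assms(2) by simp
  then show "a2 \<le> m" by simp
  then obtain k where "m = a2 + k" using le_Suc_ex by blast
  then have "(m - a2) * a1 + (n + a1) * a2 = m * a1 + n * a2"
    by (simp add: algebra_simps diff_mult_distrib)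
  then show "(m - a2, n + a1) \<in> factorizations a1 a2 x" using assms(4) unfolding factorizations_def by simp
qed

section \<open>The function \<open>\<mu>\<close>\<close>

locale tnorm_semigroup =
  fixes a1 a2 :: nat and t :: real
  assumes a1_gt_1: "1 < a1" and a1_lt_a2: "a1 < a2" and coprime: "coprime a1 a2"
    and t_gt_1: "1 < t"
begin

definition coord1 :: "real \<Rightarrow> real" where "coord1 r = (1 - r) / real a1"
definition coord2 :: "real \<Rightarrow> real" where "coord2 r = r / real a2"
definition psum :: "real \<Rightarrow> real" where "psum r = coord1 r powr t + coord2 r powr t"
definition \<mu> :: "real \<Rightarrow> real" where "\<mu> r = psum r powr (1 / t)"

text \<open>The derivative of \<open>\<mu>\<close> is written through the increasing weight \<open>weight r \<in> [0, 1]\<close>,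
  which makes it evident that \<open>\<mu>\<close> is strictly convex.\<close>
definition weight :: "real \<Rightarrow> real" where "weight r = coord2 r powr t / psum r"
definition slope :: "real \<Rightarrow> real" where
  "slope p = p powr ((t - 1) / t) / real a2 - (1 - p) powr ((t - 1) / t) / real a1"
definition d\<mu> :: "real \<Rightarrow> real" where "d\<mu> r = slope (weight r)"

lemma real_a1_gt_1: "1 < real a1" and real_a2_gt_1: "1 < real a2"
  and real_a1_lt_a2: "real a1 < real a2"
  using a1_gt_1 a1_lt_a2 by auto

lemma a1_a2_pos [simp]: "0 < a1" "0 < a2" "a1 \<noteq> 0" "a2 \<noteq> 0"
  using a1_gt_1 a1_lt_a2 by auto

lemma coord1_nonneg: "r \<le> 1 \<Longrightarrow> 0 \<le> coord1 r"
  unfolding coord1_def using real_a1_gt_1 by auto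

lemma coord2_nonneg: "0 \<le> r \<Longrightarrow> 0 \<le> coord2 r"
  unfolding coord2_def using real_a2_gt_1 by auto

lemma psum_pos:
  assumes "0 \<le> r" "r \<le> 1"
  shows "0 < psum r"
proof (cases "r = 1")
  case True
  then show ?thesis unfolding psum_def coord2_def coord1_def using real_a2_gt_1 by auto
next
  case False
  then have "0 < coord1 r" unfolding coord1_def using assms real_a1_gt_1 by auto
  then show ?thesis unfolding psum_def using coord2_nonneg[OF assms(1)] by (simp add: add_pos_nonneg)
qed

lemma mu_0: "\<mu> 0 = 1 / real a1"
  unfolding \<mu>_def psum_def coord1_def coord2_def using t_gt_1 real_a1_gt_1 by (simp add: powr_powr)

lemma mu_1: "\<mu> 1 = 1 / real a2"
  unfolding \<mu>_def psum_def coord1_def coord2_def using t_gt_1 real_a2_gt_1 by (simp add: powr_powr)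

lemma mu_eq: "0 \<le> r \<Longrightarrow> r \<le> 1 \<Longrightarrow> mu a1 a2 r t = \<mu> r"
  unfolding mu_def tnorm_def \<mu>_def psum_def coord1_def coord2_def
  using real_a1_gt_1 real_a2_gt_1 by simp

lemma one_minus_weight:
  assumes "0 \<le> r" "r \<le> 1"
  shows "1 - weight r = coord1 r powr t / psum r"
  using psum_pos[OF assms] unfolding weight_def psum_def by (simp add: field_simps)

lemma weight_range:
  assumes "0 \<le> r" "r \<le> 1"
  shows "0 \<le> weight r" "weight r \<le> 1"
proof -
  show "0 \<le> weight r" unfolding weight_def using psum_pos[OF assms] by simp
  have "0 \<le> coord1 r powr t / psum r" using psum_pos[OF assms] by simp
  then show "weight r \<le> 1" using one_minus_weight[OF assms] by simp
qed

lemma weight_0: "weight 0 = 0"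
  unfolding weight_def coord2_def by simp

lemma weight_1: "weight 1 = 1"
  unfolding weight_def psum_def coord1_def coord2_def by simp

lemma weight_strict_mono:
  assumes "0 \<le> r" "r < r'" "r' \<le> 1"
  shows "weight r < weight r'"
proof -
  have "coord2 r * coord1 r' < coord2 r' * coord1 r"
    unfolding coord1_def coord2_def using assms real_a1_gt_1 real_a2_gt_1 by (simp add: field_simps)
  then have "(coord2 r * coord1 r') powr t < (coord2 r' * coord1 r) powr t"
    using t_gt_1 coord1_nonneg coord2_nonneg assms by (intro powr_less_mono2) auto
  then have "coord2 r powr t * psum r' < coord2 r' powr t * psum r"
    unfolding psum_def using coord1_nonneg coord2_nonneg assms by (simp add: powr_mult algebra_simps)
  then show ?thesis unfolding weight_def using psum_pos assms by (simp add: field_simps)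
qed

lemma slope_strict_mono:
  assumes "0 \<le> p" "p < p'" "p' \<le> 1"
  shows "slope p < slope p'"
proof -
  have "0 < (t - 1) / t" using t_gt_1 by simp
  then have "p powr ((t - 1) / t) < p' powr ((t - 1) / t)"
    and "(1 - p') powr ((t - 1) / t) < (1 - p) powr ((t - 1) / t)"
    using assms by (auto intro: powr_less_mono2)
  then show ?thesis unfolding slope_def using real_a1_gt_1 real_a2_gt_1
    by (simp add: divide_strict_right_mono diff_strict_mono)
qed

lemma dmu_strict_mono:
  assumes "0 \<le> r" "r < r'" "r' \<le> 1"
  shows "d\<mu> r < d\<mu> r'"
  unfolding d\<mu>_def using weight_strict_mono[OF assms] weight_range assms
  by (intro slope_strict_mono) auto

lemma dmu_0: "d\<mu> 0 = - 1 / real a1"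
  unfolding d\<mu>_def weight_0 slope_def using t_gt_1 by simp

lemma dmu_1: "d\<mu> 1 = 1 / real a2"
  unfolding d\<mu>_def weight_1 slope_def using t_gt_1 by simp

lemma dmu_bounds:
  assumes "0 \<le> r" "r \<le> 1"
  shows "- 1 / real a1 \<le> d\<mu> r" "d\<mu> r \<le> 1 / real a2"
  using dmu_strict_mono[of 0 r] dmu_strict_mono[of r 1] assms dmu_0 dmu_1
  by (cases "r = 0"; cases "r = 1"; force)+

lemma weight_powr:
  assumes "0 < w" "0 < g"
  shows "(w powr t / g) powr ((t - 1) / t) = w powr (t - 1) * g powr (1 / t - 1)"
proof -
  have "1 / t - 1 = - ((t - 1) / t)" using t_gt_1 by (simp add: field_simps)
  then have "g powr (1 / t - 1) = 1 / g powr ((t - 1) / t)"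
    using assms by (simp add: powr_minus divide_inverse)
  moreover have "(w powr t) powr ((t - 1) / t) = w powr (t - 1)"
    using t_gt_1 by (simp add: powr_powr)
  ultimately show ?thesis using assms by (simp add: powr_divide)
qed

lemma mu_has_derivative:
  assumes "0 < r" "r < 1"
  shows "(\<mu> has_real_derivative d\<mu> r) (at r)"
proof -
  have c1: "0 < coord1 r" unfolding coord1_def using assms real_a1_gt_1 by auto
  have c2: "0 < coord2 r" unfolding coord2_def using assms real_a2_gt_1 by auto
  have ps: "0 < psum r" using psum_pos assms by auto
  have "(coord1 has_real_derivative (- 1 / real a1)) (at r)"
    unfolding coord1_def[abs_def] by (auto intro!: derivative_eq_intros)
  moreover have "(coord2 has_real_derivative (1 / real a2)) (at r)"
    unfolding coord2_def[abs_def] by (auto intro!: derivative_eq_intros)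
  ultimately have dpsum: "(psum has_real_derivative
      (t * coord1 r powr (t - 1) * (- 1 / real a1) + t * coord2 r powr (t - 1) * (1 / real a2))) (at r)"
    unfolding psum_def[abs_def] using c1 c2 by (auto intro!: derivative_eq_intros)
  then have deriv: "(\<mu> has_real_derivative (1 / t) * psum r powr (1 / t - 1) *
      (t * coord1 r powr (t - 1) * (- 1 / real a1) + t * coord2 r powr (t - 1) * (1 / real a2))) (at r)"
    unfolding \<mu>_def[abs_def] using DERIV_fun_powr[OF dpsum ps, of "1 / t"] by simp
  have "d\<mu> r = (coord2 r powr t / psum r) powr ((t - 1) / t) / real a2
      - (coord1 r powr t / psum r) powr ((t - 1) / t) / real a1"
    unfolding d\<mu>_def slope_def using one_minus_weight[of r] assms by (simp add: weight_def)
  also have "\<dots> = (1 / t) * psum r powr (1 / t - 1) *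
      (t * coord1 r powr (t - 1) * (- 1 / real a1) + t * coord2 r powr (t - 1) * (1 / real a2))"
    using weight_powr[OF c1 ps] weight_powr[OF c2 ps] t_gt_1 by (simp add: field_simps)
  finally show ?thesis using deriv by simp
qed

lemma continuous_on_mu: "continuous_on {0..1} \<mu>"
proof -
  have "continuous_on {0..1} psum"
    unfolding psum_def[abs_def] coord1_def coord2_def using t_gt_1
    by (intro continuous_on_add continuous_on_powr') (auto intro!: continuous_intros)
  then show ?thesis
    unfolding \<mu>_def[abs_def] using psum_pos t_gt_1
    by (intro continuous_on_powr') (auto intro!: continuous_intros less_imp_le)
qed

lemma continuous_on_dmu: "continuous_on {0..1} d\<mu>"
proof -
  have "continuous_on {0..1} psum" "continuous_on {0..1} (\<lambda>r. coord2 r powr t)"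
    unfolding psum_def[abs_def] coord1_def coord2_def using t_gt_1
    by (intro continuous_on_add continuous_on_powr'; auto intro!: continuous_intros)+
  then have "continuous_on {0..1} weight"
    unfolding weight_def[abs_def] using psum_pos
    by (intro continuous_on_divide) (auto simp: less_imp_neq[symmetric])
  moreover have "continuous_on {0..1} slope"
    unfolding slope_def[abs_def] using t_gt_1
    by (intro continuous_intros continuous_on_powr') (auto intro!: continuous_intros)
  ultimately have "continuous_on {0..1} (slope \<circ> weight)"
    using weight_range by (intro continuous_on_compose) (auto intro: continuous_on_subset)
  then show ?thesis unfolding d\<mu>_def[abs_def] o_def .
qed

lemma mu_mvt:
  assumes "0 \<le> a" "a < b" "b \<le> 1"
  obtains z where "a < z" "z < b" "\<mu> b - \<mu> a = (b - a) * d\<mu> z"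
proof -
  have "continuous_on {a..b} \<mu>" using continuous_on_mu by (rule continuous_on_subset) (use assms in auto)
  moreover have "\<mu> differentiable (at x)" if "a < x" "x < b" for x
    using mu_has_derivative[of x] that assms real_differentiable_def by force
  ultimately obtain l z where "a < z" "z < b" "DERIV \<mu> z :> l" "\<mu> b - \<mu> a = (b - a) * l"
    using MVT[OF assms(2)] by blast
  moreover have "DERIV \<mu> z :> d\<mu> z" using mu_has_derivative \<open>a < z\<close> \<open>z < b\<close> assms by auto
  ultimately show ?thesis using that DERIV_unique by blast
qed

lemma mu_locally_linear:
  assumes "c \<in> {0..1}" "0 < e"
  obtains \<eta> where "0 < \<eta>" "\<And>r r'. r \<in> {0..1} \<Longrightarrow> r' \<in> {0..1} \<Longrightarrow> \<bar>r - c\<bar> < \<eta> \<Longrightarrow> \<bar>r' - c\<bar> < \<eta> \<Longrightarrow>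
    \<bar>\<mu> r - \<mu> r' - (r - r') * d\<mu> c\<bar> \<le> e * \<bar>r - r'\<bar>"
proof -
  obtain \<eta> where "0 < \<eta>" and \<eta>: "\<And>z. z \<in> {0..1} \<Longrightarrow> dist z c < \<eta> \<Longrightarrow> dist (d\<mu> z) (d\<mu> c) < e"
    using continuous_on_dmu assms unfolding continuous_on_iff by metis
  have ordered: "\<bar>\<mu> r - \<mu> r' - (r - r') * d\<mu> c\<bar> \<le> e * \<bar>r - r'\<bar>"
    if rr': "0 \<le> r" "r < r'" "r' \<le> 1" "\<bar>r - c\<bar> < \<eta>" "\<bar>r' - c\<bar> < \<eta>" for r r'
  proof -
    obtain z where z: "r < z" "z < r'" "\<mu> r' - \<mu> r = (r' - r) * d\<mu> z"
      using mu_mvt rr' by blast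
    have "\<bar>d\<mu> z - d\<mu> c\<bar> < e" using \<eta>[of z] z rr' by (auto simp: dist_real_def)
    moreover have "\<mu> r - \<mu> r' - (r - r') * d\<mu> c = (r' - r) * (d\<mu> c - d\<mu> z)"
      using z(3) by (simp add: algebra_simps)
    ultimately show ?thesis using rr' by (simp add: abs_mult abs_minus_commute mult.commute)
  qed
  have "\<bar>\<mu> r - \<mu> r' - (r - r') * d\<mu> c\<bar> \<le> e * \<bar>r - r'\<bar>"
    if "r \<in> {0..1}" "r' \<in> {0..1}" "\<bar>r - c\<bar> < \<eta>" "\<bar>r' - c\<bar> < \<eta>" for r r'
    using ordered[of r r'] ordered[of r' r] that
    by (cases r r' rule: linorder_cases) (auto simp: abs_minus_commute algebra_simps)
  with \<open>0 < \<eta>\<close> show ?thesis using that by blast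
qed

lemma dmu_has_zero: "\<exists>z. 0 < z \<and> z < 1 \<and> d\<mu> z = 0"
proof -
  obtain z where z: "0 \<le> z" "z \<le> 1" "d\<mu> z = 0"
    using IVT'[of d\<mu> 0 0 1] continuous_on_dmu dmu_0 dmu_1 by auto
  moreover have "z \<noteq> 0" "z \<noteq> 1" using z dmu_0 dmu_1 by auto
  ultimately show ?thesis by (intro exI[of _ z]) auto
qed

definition \<zeta> :: real where "\<zeta> = (SOME z. 0 < z \<and> z < 1 \<and> d\<mu> z = 0)"

lemma zeta: "0 < \<zeta>" "\<zeta> < 1" "d\<mu> \<zeta> = 0"
  using someI_ex[OF dmu_has_zero] unfolding \<zeta>_def by auto

lemma mu_strict_antimono:
  assumes "0 \<le> a" "a < b" "b \<le> \<zeta>"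
  shows "\<mu> b < \<mu> a"
proof -
  obtain z where z: "a < z" "z < b" "\<mu> b - \<mu> a = (b - a) * d\<mu> z"
    using mu_mvt[of a b] assms zeta by auto
  have "d\<mu> z < 0" using dmu_strict_mono[of z \<zeta>] z assms zeta by auto
  then have "(b - a) * d\<mu> z < 0" using assms by (simp add: mult_pos_neg)
  then show ?thesis using z by simp
qed

lemma mu_antimono: "0 \<le> a \<Longrightarrow> a \<le> b \<Longrightarrow> b \<le> \<zeta> \<Longrightarrow> \<mu> b \<le> \<mu> a"
  using mu_strict_antimono[of a b] by (cases "a = b") auto

lemma mu_strict_mono:
  assumes "\<zeta> \<le> a" "a < b" "b \<le> 1"
  shows "\<mu> a < \<mu> b"
proof -
  obtain z where z: "a < z" "z < b" "\<mu> b - \<mu> a = (b - a) * d\<mu> z"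
    using mu_mvt[of a b] assms zeta by auto
  have "0 < d\<mu> z" using dmu_strict_mono[of \<zeta> z] z assms zeta by auto
  then have "0 < (b - a) * d\<mu> z" using assms by simp
  then show ?thesis using z by simp
qed

lemma mu_le_max:
  assumes "0 \<le> a" "a \<le> r" "r \<le> b" "b \<le> 1"
  shows "\<mu> r \<le> max (\<mu> a) (\<mu> b)"
proof (cases "r \<le> \<zeta>")
  case True
  then show ?thesis using mu_antimono[of a r] assms by simp
next
  case False
  then show ?thesis using mu_strict_mono[of r b] assms by (cases "r = b") auto
qed

lemma mu_has_level_point: "\<exists>p. 0 < p \<and> p < \<zeta> \<and> \<mu> p = 1 / real a2"
proof -
  have cont: "continuous_on {0..\<zeta>} \<mu>"
    using continuous_on_mu by (rule continuous_on_subset) (use zeta in auto)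
  have "\<mu> \<zeta> < 1 / real a2" using mu_strict_mono[of \<zeta> 1] zeta mu_1 by auto
  have "1 / real a2 < \<mu> 0" using mu_0 real_a1_gt_1 real_a1_lt_a2 by (simp add: frac_less2)
  then obtain p where p: "0 \<le> p" "p \<le> \<zeta>" "\<mu> p = 1 / real a2"
    using IVT2'[of \<mu> \<zeta> "1 / real a2" 0] cont zeta \<open>\<mu> \<zeta> < 1 / real a2\<close> by force
  moreover have "p \<noteq> 0" "p \<noteq> \<zeta>"
    using p \<open>\<mu> \<zeta> < 1 / real a2\<close> \<open>1 / real a2 < \<mu> 0\<close> by auto
  ultimately show ?thesis by (intro exI[of _ p]) auto
qed

definition \<rho> :: real where "\<rho> = (SOME p. 0 < p \<and> p < \<zeta> \<and> \<mu> p = 1 / real a2)"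

lemma rho: "0 < \<rho>" "\<rho> < \<zeta>" "\<mu> \<rho> = 1 / real a2"
  using someI_ex[OF mu_has_level_point] unfolding \<rho>_def by auto

lemma rho_lt_1: "\<rho> < 1"
  using rho zeta by simp

lemma mu_gt_level: "0 \<le> r \<Longrightarrow> r < \<rho> \<Longrightarrow> 1 / real a2 < \<mu> r"
  using mu_strict_antimono[of r \<rho>] rho by auto

lemma mu_ge_level: "0 \<le> r \<Longrightarrow> r \<le> \<rho> \<Longrightarrow> 1 / real a2 \<le> \<mu> r"
  using mu_gt_level[of r] rho by (cases "r = \<rho>") auto

lemma mu_lt_level:
  assumes "\<rho> < r" "r < 1"
  shows "\<mu> r < 1 / real a2"
proof (cases "r \<le> \<zeta>")
  case True
  then show ?thesis using mu_strict_antimono[of \<rho> r] rho assms by auto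
next
  case False
  then show ?thesis using mu_strict_mono[of r 1] mu_1 assms by auto
qed

lemma mu_le_level: "\<rho> \<le> r \<Longrightarrow> r \<le> 1 \<Longrightarrow> \<mu> r \<le> 1 / real a2"
  using mu_lt_level[of r] rho mu_1 by (cases "r = \<rho> \<or> r = 1") auto

lemma mu_le_right_of:
  assumes "0 \<le> s" "s \<le> \<rho>" "s \<le> r" "r \<le> 1"
  shows "\<mu> r \<le> \<mu> s"
proof (cases "r \<le> \<rho>")
  case True
  then show ?thesis using mu_antimono[of s r] assms rho by auto
next
  case False
  then show ?thesis using mu_le_level[of r] mu_ge_level[of s] assms by auto
qed

lemma r0_eq: "r0 a1 a2 t = \<rho>"
  unfolding r0_def
proof (rule Least_equality)
  show "\<rho> \<in> {0..1} \<and> mu a1 a2 \<rho> t = 1 / real a2"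
    using rho rho_lt_1 mu_eq[of \<rho>] by auto
  show "\<rho> \<le> r" if r: "r \<in> {0..1} \<and> mu a1 a2 r t = 1 / real a2" for r
  proof (rule ccontr)
    assume "\<not> \<rho> \<le> r"
    then have "1 / real a2 < \<mu> r" using mu_gt_level[of r] r by auto
    then show False using mu_eq[of r] r by auto
  qed
qed

text \<open>\<open>\<Delta>\<^sub>t(S)\<close> is dense in \<open>[\<sigma>, a2]\<close> for every \<open>t\<close> and in \<open>[0, \<sigma>]\<close> when \<open>\<rho>\<close> is irrational;
  for rational \<open>\<rho>\<close> it misses part of \<open>(a1, \<sigma>)\<close>.\<close>
definition \<sigma> :: real where "\<sigma> = real a1 * real a2 * - d\<mu> \<rho>"

lemma dmu_rho_neg: "d\<mu> \<rho> < 0"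
  using dmu_strict_mono[of \<rho> \<zeta>] rho zeta by auto

lemma sigma_pos: "0 < \<sigma>"
  unfolding \<sigma>_def using dmu_rho_neg by (simp add: mult_pos_neg)

lemma sigma_le_a2: "\<sigma> \<le> real a2"
proof -
  have "- d\<mu> \<rho> \<le> 1 / real a1" using dmu_bounds(1)[of \<rho>] rho rho_lt_1 by simp
  then have "real a1 * real a2 * - d\<mu> \<rho> \<le> real a1 * real a2 * (1 / real a1)"
    by (intro mult_left_mono) auto
  then show ?thesis unfolding \<sigma>_def by simp
qed

lemma sigma_lower_bound: "real a2 - (real a1 + real a2) * \<rho> powr (t - 1) \<le> \<sigma>"
proof -
  have "psum \<rho> = \<mu> \<rho> powr t"
    unfolding \<mu>_def using psum_pos[of \<rho>] rho rho_lt_1 t_gt_1 by (simp add: powr_powr)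
  then have "weight \<rho> = \<rho> powr t"
    unfolding weight_def coord2_def using rho by (simp add: powr_divide)
  then have w: "weight \<rho> powr ((t - 1) / t) = \<rho> powr (t - 1)"
    using t_gt_1 rho by (simp add: powr_powr)
  define W where "W = 1 - weight \<rho>"
  have "0 \<le> W" "W \<le> 1" unfolding W_def using weight_range[of \<rho>] rho rho_lt_1 by auto
  then have "real a2 * W \<le> real a2 * W powr ((t - 1) / t)"
    using powr_mono'[of "(t - 1) / t" 1 W] t_gt_1 by simp
  moreover have "real a2 - real a2 * \<rho> powr (t - 1) \<le> real a2 * W"
    using powr_mono'[of "t - 1" t \<rho>] rho rho_lt_1
    unfolding W_def \<open>weight \<rho> = \<rho> powr t\<close> by (simp add: right_diff_distrib)
  moreover have "real a1 * real a2 * - (A / real a2 - B / real a1) = real a2 * B - real a1 * A" for A B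
    by (simp add: field_simps)
  then have "\<sigma> = real a2 * W powr ((t - 1) / t) - real a1 * \<rho> powr (t - 1)"
    unfolding \<sigma>_def d\<mu>_def slope_def W_def w by simp
  ultimately show ?thesis unfolding distrib_right by linarith
qed

section \<open>Factorizations as shares\<close>

text \<open>A factorization \<open>(m, n)\<close> of \<open>x\<close> is encoded by the share \<open>r = n a2 / x\<close> of \<open>x\<close> carried by
  the generator \<open>a2\<close>; its \<open>t\<close>-length is then \<open>x \<mu>(r)\<close>.\<close>
definition shares :: "nat \<Rightarrow> real set" where
  "shares x = (\<lambda>(m, n). real a2 * real n / real x) ` factorizations a1 a2 x"

lemma finite_shares: "finite (shares x)"
  unfolding shares_def using finite_factorizations[of a1 a2 x] by simp

lemma shares_subset: "shares x \<subseteq> {0..1}"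
proof clarify
  fix r assume "r \<in> shares x"
  then obtain m n where mn: "m * a1 + n * a2 = x" "r = real a2 * real n / real x"
    unfolding shares_def factorizations_def by auto
  then have "real a2 * real n \<le> real x" by (metis le_add2 mult.commute of_nat_le_iff of_nat_mult)
  then show "r \<in> {0..1}" using mn(2) by (auto simp: divide_le_eq_1)
qed

lemma shares_bounds: "r \<in> shares x \<Longrightarrow> 0 \<le> r" "r \<in> shares x \<Longrightarrow> r \<le> 1"
  using shares_subset[of x] by auto

lemma tnorm_eq_mu:
  assumes "0 < x" "m * a1 + n * a2 = x"
  shows "tnorm t (real m, real n) = real x * \<mu> (real a2 * real n / real x)"
proof -
  have x: "0 < real x" "real x = real m * real a1 + real n * real a2"
    using assms by (simp_all flip: of_nat_mult of_nat_add)
  then have "1 - real a2 * real n / real x = real a1 * real m / real x"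
    by (simp add: field_simps)
  then have "coord1 (real a2 * real n / real x) = real m / real x"
    unfolding coord1_def by simp
  moreover have "coord2 (real a2 * real n / real x) = real n / real x"
    unfolding coord2_def by simp
  ultimately have "\<mu> (real a2 * real n / real x) = tnorm t (real m, real n) / real x"
    unfolding \<mu>_def psum_def tnorm_def using x t_gt_1
    by (simp add: powr_divide add_divide_distrib[symmetric] powr_powr)
  then show ?thesis using x by simp
qed

lemma tlengths_eq:
  assumes "0 < x"
  shows "tlengths a1 a2 t x = (\<lambda>r. real x * \<mu> r) ` shares x"
  unfolding tlengths_def shares_def image_image
  by (rule image_cong[OF refl]) (auto simp: factorizations_def tnorm_eq_mu[OF assms])

lemma shares_step:
  assumes "0 < x" "r \<in> shares x" "r' \<in> shares x" "r < r'"
  shows "r + real a1 * real a2 / real x \<in> shares x" "r + real a1 * real a2 / real x \<le> r'"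
proof -
  obtain m n where mn: "(m, n) \<in> factorizations a1 a2 x" "r = real a2 * real n / real x"
    using assms(2) unfolding shares_def by auto
  obtain m' n' where mn': "(m', n') \<in> factorizations a1 a2 x" "r' = real a2 * real n' / real x"
    using assms(3) unfolding shares_def by auto
  have "n < n'" using assms(1,4) mn(2) mn'(2) by (simp add: divide_less_cancel)
  then have trade: "(m - a2, n + a1) \<in> factorizations a1 a2 x" "n + a1 \<le> n'"
    using factorization_trade[OF coprime _ _ mn(1) mn'(1)] by auto
  have r: "r + real a1 * real a2 / real x = real a2 * real (n + a1) / real x"
    using mn(2) by (simp add: add_divide_distrib algebra_simps)
  show "r + real a1 * real a2 / real x \<in> shares x"
    unfolding r shares_def using trade(1) by force
  show "r + real a1 * real a2 / real x \<le> r'"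
    unfolding r mn'(2) using trade(2) by (intro divide_right_mono mult_left_mono) auto
qed

lemma Max_shares:
  assumes "0 < x" "factorizations a1 a2 x \<noteq> {}"
  obtains m0 n0 where "(m0, n0) \<in> factorizations a1 a2 x" "m0 < a2"
    "Max (shares x) = real a2 * real n0 / real x"
proof -
  have "shares x \<noteq> {}" using assms unfolding shares_def by auto
  then have "Max (shares x) \<in> shares x" by (rule Max_in[OF finite_shares])
  then obtain m0 n0 where mn: "(m0, n0) \<in> factorizations a1 a2 x"
    "Max (shares x) = real a2 * real n0 / real x"
    unfolding shares_def by auto
  have "m0 < a2"
  proof (rule ccontr)
    assume "\<not> m0 < a2"
    then obtain k where "m0 = a2 + k" using le_Suc_ex not_less by blast
    then have "(m0 - a2) * a1 + (n0 + a1) * a2 = m0 * a1 + n0 * a2"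
      by (simp add: algebra_simps diff_mult_distrib)
    then have "real a2 * real (n0 + a1) / real x \<in> shares x"
      using mn(1) unfolding shares_def factorizations_def by force
    then have "real a2 * real (n0 + a1) / real x \<le> Max (shares x)" using finite_shares by simp
    moreover have "real a2 * real n0 / real x < real a2 * real (n0 + a1) / real x"
      using assms(1) by (simp add: divide_strict_right_mono)
    ultimately show False using mn(2) by simp
  qed
  then show ?thesis using mn that by blast
qed

lemma shares_multiple:
  assumes "0 < N"
  shows "shares (a1 * a2 * N) = (\<lambda>k. real k / real N) ` {..N}"
proof
  show "shares (a1 * a2 * N) \<subseteq> (\<lambda>k. real k / real N) ` {..N}"
  proof
    fix r assume "r \<in> shares (a1 * a2 * N)"
    then obtain m n where mn: "m * a1 + n * a2 = a1 * a2 * N"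
      "r = real a2 * real n / real (a1 * a2 * N)"
      unfolding shares_def factorizations_def by auto
    then have "a2 dvd m * a1" by (metis dvd_add_times_triv_right_iff dvd_triv_left mult.assoc mult.commute)
    then obtain i where i: "m = a2 * i"
      using coprime by (metis coprime_commute coprime_dvd_mult_left_iff dvdE)
    then have "a2 * (i * a1 + n) = a2 * (a1 * N)" using mn(1) by (simp add: algebra_simps)
    then have iN: "i * a1 + n = a1 * N" by simp
    then have "i * a1 \<le> a1 * N" by linarith
    then have "i \<le> N" by (simp add: mult.commute)
    have "n = a1 * (N - i)" using iN by (simp add: diff_mult_distrib2 mult.commute)
    then have "r = real (N - i) / real N"
      using mn(2) assms by (simp add: field_simps)
    then show "r \<in> (\<lambda>k. real k / real N) ` {..N}" by auto
  qed
  show "(\<lambda>k. real k / real N) ` {..N} \<subseteq> shares (a1 * a2 * N)"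
  proof (rule image_subsetI)
    fix k assume "k \<in> {..N}"
    then have "(a2 * (N - k)) * a1 + (a1 * k) * a2 = a1 * a2 * N"
      by (simp add: algebra_simps diff_mult_distrib2)
    then have "(a2 * (N - k), a1 * k) \<in> factorizations a1 a2 (a1 * a2 * N)"
      unfolding factorizations_def by simp
    moreover have "real k / real N = real a2 * real (a1 * k) / real (a1 * a2 * N)"
      using assms by (simp add: field_simps)
    ultimately show "real k / real N \<in> shares (a1 * a2 * N)" unfolding shares_def by force
  qed
qed

lemma multiple_in_semigrp: "a1 * a2 * N \<in> semigrp a1 a2"
  unfolding semigrp_def by (rule CollectI exI[of _ 0] exI[of _ "a1 * N"])+ (simp add: algebra_simps)

lemma finite_delta_t: "finite (delta_t a1 a2 t x)"
  unfolding delta_t_def tlengths_def using finite_factorizations[of a1 a2 x]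
  by (intro consec_diffs_finite) auto

definition consecutive_shares :: "nat \<Rightarrow> real \<Rightarrow> real \<Rightarrow> bool" where
  "consecutive_shares x r1 r2 \<longleftrightarrow> r1 \<in> shares x \<and> r2 \<in> shares x \<and> \<mu> r1 < \<mu> r2 \<and>
    (\<forall>r \<in> shares x. \<not> (\<mu> r1 < \<mu> r \<and> \<mu> r < \<mu> r2))"

lemma delta_t_iff:
  assumes "0 < x"
  shows "g \<in> delta_t a1 a2 t x \<longleftrightarrow>
    (\<exists>r1 r2. consecutive_shares x r1 r2 \<and> g = real x * (\<mu> r2 - \<mu> r1))"
proof -
  have "real x * \<mu> r1 < real x * \<mu> r2 \<longleftrightarrow> \<mu> r1 < \<mu> r2" for r1 r2
    using assms by simp
  then show ?thesis
    unfolding delta_t_def consec_diffs_def tlengths_eq[OF assms] consecutive_shares_def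
    by (auto simp: right_diff_distrib) blast+
qed

lemma consecutive_sharesI:
  assumes "lo \<in> shares x" "hi \<in> shares x" "lo \<le> \<zeta>" "\<mu> hi < \<mu> lo"
    and above: "\<And>r. r \<in> shares x \<Longrightarrow> lo < r \<Longrightarrow> \<mu> r \<le> \<mu> hi"
  shows "consecutive_shares x hi lo"
proof -
  have "\<mu> lo \<le> \<mu> r" if "r \<in> shares x" "r \<le> lo" for r
    using mu_antimono[of r lo] shares_subset[of x] that assms(3) by auto
  then show ?thesis unfolding consecutive_shares_def using assms above by force
qed

lemma shares_multiple_next:
  assumes "0 < N" "r \<in> shares (a1 * a2 * N)" "real k / real N < r"
  shows "real (k + 1) / real N \<le> r"
proof -
  obtain i where "r = real i / real N" using assms(1,2) shares_multiple by auto
  then have "k < i" using assms by (simp add: divide_strict_right_mono_neg divide_less_cancel)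
  then show ?thesis using \<open>r = real i / real N\<close> by (simp add: divide_right_mono)
qed

lemma delta_t_S_multipleI:
  assumes "0 < N" "g \<in> delta_t a1 a2 t (a1 * a2 * N)"
  shows "g \<in> delta_t_S a1 a2 t"
  unfolding delta_t_S_def using assms multiple_in_semigrp by blast

section \<open>Irrational \<open>\<rho>\<close>: dull parameters\<close>

lemma grid_gap_below_rho:
  assumes "0 < N" "real (k + 1) / real N \<le> \<rho>"
  shows "real (a1 * a2 * N) * (\<mu> (real k / real N) - \<mu> (real (k + 1) / real N)) \<in> delta_t_S a1 a2 t"
proof -
  define x where "x = a1 * a2 * N"
  define lo where "lo = real k / real N"
  define hi where "hi = real (k + 1) / real N"
  have "0 < x" unfolding x_def using assms by simp
  have "0 \<le> lo" "lo < hi" unfolding lo_def hi_def using assms(1) by (simp_all add: divide_strict_right_mono)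
  have "real (k + 1) \<le> \<rho> * real N" using assms by (simp add: divide_le_eq)
  moreover have "\<rho> * real N < real N" using rho_lt_1 assms(1) by simp
  ultimately have "k + 1 \<le> N" by linarith
  then have in_shares: "lo \<in> shares x" "hi \<in> shares x"
    unfolding x_def shares_multiple[OF assms(1)] lo_def hi_def by (auto simp del: of_nat_add of_nat_Suc)
  have "\<mu> hi < \<mu> lo"
    using mu_strict_antimono[of lo hi] \<open>0 \<le> lo\<close> \<open>lo < hi\<close> assms(2) rho unfolding hi_def by simp
  moreover have "\<mu> r \<le> \<mu> hi" if "r \<in> shares x" "lo < r" for r
    using mu_le_right_of[of hi r] shares_multiple_next[of N r k] shares_bounds[of r x] that assms
      \<open>0 \<le> lo\<close> \<open>lo < hi\<close> unfolding x_def lo_def hi_def by simp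
  ultimately have "consecutive_shares x hi lo"
    using consecutive_sharesI in_shares \<open>lo < hi\<close> assms(2) rho unfolding hi_def by auto
  then have "real x * (\<mu> lo - \<mu> hi) \<in> delta_t a1 a2 t x"
    using delta_t_iff[OF \<open>0 < x\<close>] by blast
  then show ?thesis unfolding x_def lo_def hi_def using delta_t_S_multipleI assms(1) by blast
qed

lemma grid_gap_to_top:
  assumes "0 < N" "real j / real N < \<rho>" "\<rho> < real (j + 1) / real N"
  shows "real (a1 * a2 * N) * (\<mu> (real j / real N) - \<mu> 1) \<in> delta_t_S a1 a2 t"
proof -
  define x where "x = a1 * a2 * N"
  define lo where "lo = real j / real N"
  have "0 < x" unfolding x_def using assms by simp
  have "0 \<le> lo" unfolding lo_def by simp
  have "real j / real N < 1" using assms(2) rho_lt_1 by linarith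
  then have "j \<le> N" using assms(1) by (simp add: divide_less_eq)
  then have in_shares: "lo \<in> shares x" "1 \<in> shares x"
    unfolding x_def shares_multiple[OF assms(1)] lo_def using assms(1)
    by (auto intro: image_eqI[where x = N])
  have "\<mu> 1 < \<mu> lo" using mu_gt_level[of lo] \<open>0 \<le> lo\<close> assms(2) mu_1 unfolding lo_def by simp
  moreover have "\<mu> r \<le> \<mu> 1" if "r \<in> shares x" "lo < r" for r
    using shares_multiple_next[of N r j] mu_le_level[of r] mu_1 shares_bounds[of r x] that assms
    unfolding x_def lo_def by simp
  ultimately have "consecutive_shares x 1 lo"
    using consecutive_sharesI in_shares assms(2) rho unfolding lo_def by auto
  then have "real x * (\<mu> lo - \<mu> 1) \<in> delta_t a1 a2 t x"
    using delta_t_iff[OF \<open>0 < x\<close>] by blast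
  then show ?thesis unfolding x_def lo_def using delta_t_S_multipleI assms(1) by blast
qed

text \<open>For \<open>x = a1 a2 N\<close> the shares form the grid \<open>{k / N}\<close>: two neighbouring grid points below
  \<open>\<rho>\<close> near \<open>s\<close> give consecutive lengths differing by about \<open>-a1 a2 \<mu>'(s)\<close>, which sweeps
  \<open>(\<sigma>, a2)\<close> as \<open>s\<close> runs through \<open>(0, \<rho>)\<close>.\<close>
lemma gaps_dense_above_sigma:
  assumes "\<sigma> < y" "y < real a2"
  shows "y \<in> closure (delta_t_S a1 a2 t)"
proof -
  have "d\<mu> 0 \<le> - y / (real a1 * real a2)" "- y / (real a1 * real a2) \<le> d\<mu> \<rho>"
    using assms unfolding dmu_0 \<sigma>_def by (simp_all add: field_simps)
  moreover have "continuous_on {0..\<rho>} d\<mu>"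
    using continuous_on_dmu by (rule continuous_on_subset) (use rho_lt_1 in auto)
  ultimately obtain s where s: "0 \<le> s" "s \<le> \<rho>" "d\<mu> s = - y / (real a1 * real a2)"
    using IVT'[of d\<mu> 0 _ \<rho>] rho by auto
  have "s \<noteq> \<rho>" using s(3) assms(1) unfolding \<sigma>_def by (auto simp: field_simps)
  with s have "s < \<rho>" by simp
  have y: "y = - (real a1 * real a2 * d\<mu> s)" using s(3) by simp
  show ?thesis unfolding closure_approachable
  proof (intro allI impI)
    fix e :: real assume "0 < e"
    obtain \<eta> where "0 < \<eta>" and lin: "\<And>r r'. r \<in> {0..1} \<Longrightarrow> r' \<in> {0..1} \<Longrightarrow>
        \<bar>r - s\<bar> < \<eta> \<Longrightarrow> \<bar>r' - s\<bar> < \<eta> \<Longrightarrow>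
        \<bar>\<mu> r - \<mu> r' - (r - r') * d\<mu> s\<bar> \<le> e / (2 * (real a1 * real a2)) * \<bar>r - r'\<bar>"
      using mu_locally_linear[of s "e / (2 * (real a1 * real a2))"] s rho_lt_1 \<open>0 < e\<close> by auto
    obtain N :: nat where N: "0 < N" "inverse (real N) < min \<eta> (\<rho> - s)"
      using ex_inverse_of_nat_less[of "min \<eta> (\<rho> - s)"] \<open>0 < \<eta>\<close> \<open>s < \<rho>\<close> by auto
    define k where "k = nat \<lfloor>s * N\<rfloor>"
    define lo where "lo = real k / real N"
    define hi where "hi = real (k + 1) / real N"
    have hi_lo: "hi = lo + 1 / real N" unfolding lo_def hi_def by (simp add: add_divide_distrib)
    have "real k = of_int \<lfloor>s * N\<rfloor>" unfolding k_def using s by simp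
    then have "real k \<le> s * N" "s * N < real k + 1" by linarith+
    then have "lo \<le> s" "s < hi" unfolding lo_def hi_def using N by (simp_all add: field_simps)
    have "hi < \<rho>" using hi_lo \<open>lo \<le> s\<close> N(2) by (simp add: inverse_eq_divide)
    then have g: "real (a1 * a2 * N) * (\<mu> lo - \<mu> hi) \<in> delta_t_S a1 a2 t"
      using grid_gap_below_rho[OF N(1), of k] unfolding lo_def hi_def by simp
    have "\<bar>\<mu> lo - \<mu> hi - (lo - hi) * d\<mu> s\<bar> \<le> e / (2 * (real a1 * real a2)) * (1 / real N)"
      using lin[of lo hi] hi_lo \<open>hi < \<rho>\<close> rho_lt_1 \<open>lo \<le> s\<close> \<open>s < hi\<close> N(2)
      by (simp add: inverse_eq_divide lo_def)
    then have "real a1 * real a2 * real N * \<bar>\<mu> lo - \<mu> hi - (lo - hi) * d\<mu> s\<bar> \<le> e / 2"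
      using mult_left_mono[of _ _ "real a1 * real a2 * real N"] N(1) by (simp add: field_simps)
    moreover have "real (a1 * a2 * N) * (\<mu> lo - \<mu> hi) - y =
        real a1 * real a2 * real N * (\<mu> lo - \<mu> hi - (lo - hi) * d\<mu> s)"
      unfolding y hi_lo using N(1) by (simp add: field_simps)
    ultimately have "\<bar>real (a1 * a2 * N) * (\<mu> lo - \<mu> hi) - y\<bar> \<le> e / 2" by (simp add: abs_mult)
    with g show "\<exists>g \<in> delta_t_S a1 a2 t. dist g y < e"
      using \<open>0 < e\<close> by (intro bexI[of _ "real (a1 * a2 * N) * (\<mu> lo - \<mu> hi)"]) (auto simp: dist_real_def)
  qed
qed

text \<open>For \<open>x = a1 a2 N\<close> the length just above the level \<open>x / a2\<close> of the share \<open>1\<close> comes from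
  the grid point \<open>\<lfloor>N \<rho>\<rfloor> / N\<close>, and the two differ by about \<open>\<sigma> frac (N \<rho>)\<close>; by Kronecker's
  theorem these fractional parts are dense in \<open>[0, 1]\<close>.\<close>
lemma gaps_dense_below_sigma:
  assumes "\<rho> \<notin> \<rat>" "0 < y" "y < \<sigma>"
  shows "y \<in> closure (delta_t_S a1 a2 t)"
  unfolding closure_approachable
proof (intro allI impI)
  fix e :: real assume "0 < e"
  define \<theta> where "\<theta> = y / \<sigma>"
  have "0 \<le> \<theta>" "\<theta> \<le> 1" unfolding \<theta>_def using assms sigma_pos by auto
  obtain \<eta> where "0 < \<eta>" and lin: "\<And>r r'. r \<in> {0..1} \<Longrightarrow> r' \<in> {0..1} \<Longrightarrow>
      \<bar>r - \<rho>\<bar> < \<eta> \<Longrightarrow> \<bar>r' - \<rho>\<bar> < \<eta> \<Longrightarrow>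
      \<bar>\<mu> r - \<mu> r' - (r - r') * d\<mu> \<rho>\<bar> \<le> e / (2 * (real a1 * real a2)) * \<bar>r - r'\<bar>"
    using mu_locally_linear[of \<rho> "e / (2 * (real a1 * real a2))"] rho rho_lt_1 \<open>0 < e\<close> by auto
  obtain N0 :: nat where N0: "0 < N0" "inverse (real N0) < \<eta>"
    using ex_inverse_of_nat_less \<open>0 < \<eta>\<close> by blast
  obtain N where "N0 \<le> N" and f: "0 < frac (real N * \<rho>)" "\<bar>frac (real N * \<rho>) - \<theta>\<bar> < e / (2 * \<sigma>)"
    using frac_mult_approx[OF assms(1) \<open>0 \<le> \<theta>\<close> \<open>\<theta> \<le> 1\<close> _ N0(1), of "e / (2 * \<sigma>)"] \<open>0 < e\<close> sigma_pos
    by auto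
  have "0 < N" using \<open>N0 \<le> N\<close> N0(1) by simp
  define f where "f = frac (real N * \<rho>)"
  define j where "j = nat \<lfloor>real N * \<rho>\<rfloor>"
  define lo where "lo = real j / real N"
  have "real j = real N * \<rho> - f" unfolding j_def f_def frac_def using rho by simp
  then have lo: "\<rho> - lo = f / real N" unfolding lo_def using \<open>0 < N\<close> by (simp add: field_simps)
  have "0 < f" "f < 1" unfolding f_def using f(1) frac_lt_1 by auto
  then have "0 < f / real N" "f / real N < 1 / real N"
    using \<open>0 < N\<close> by (simp_all add: divide_strict_right_mono)
  then have "lo < \<rho>" "\<rho> - lo < 1 / real N" using lo by linarith+
  moreover have "\<rho> < real (j + 1) / real N"
    using \<open>real j = real N * \<rho> - f\<close> \<open>f < 1\<close> \<open>0 < N\<close> by (simp add: field_simps)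
  ultimately have g: "real (a1 * a2 * N) * (\<mu> lo - \<mu> 1) \<in> delta_t_S a1 a2 t"
    using grid_gap_to_top[OF \<open>0 < N\<close>, of j] unfolding lo_def by simp
  have "1 / real N \<le> inverse (real N0)"
    using \<open>N0 \<le> N\<close> N0(1) by (simp add: inverse_eq_divide frac_le)
  then have "\<bar>\<mu> lo - \<mu> \<rho> - (lo - \<rho>) * d\<mu> \<rho>\<bar> \<le> e / (2 * (real a1 * real a2)) * (f / real N)"
    using lin[of lo \<rho>] lo \<open>lo < \<rho>\<close> \<open>\<rho> - lo < 1 / real N\<close> rho rho_lt_1 N0(2)
      divide_nonneg_nonneg[of "real j" "real N"] unfolding lo_def[symmetric] by simp
  then have "real a1 * real a2 * real N * \<bar>\<mu> lo - \<mu> \<rho> - (lo - \<rho>) * d\<mu> \<rho>\<bar> \<le> e / 2 * f"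
    using mult_left_mono[of _ _ "real a1 * real a2 * real N"] \<open>0 < N\<close> by (simp add: field_simps)
  moreover have "real (a1 * a2 * N) * (\<mu> lo - \<mu> 1) - f * \<sigma> =
      real a1 * real a2 * real N * (\<mu> lo - \<mu> \<rho> - (lo - \<rho>) * d\<mu> \<rho>)"
  proof -
    have f_eq: "f = real N * (\<rho> - lo)" using lo \<open>0 < N\<close> by simp
    have "\<mu> 1 = \<mu> \<rho>" using mu_1 rho(3) by simp
    then show ?thesis unfolding \<sigma>_def f_eq by (simp add: algebra_simps)
  qed
  ultimately have "\<bar>real (a1 * a2 * N) * (\<mu> lo - \<mu> 1) - f * \<sigma>\<bar> \<le> e / 2 * f" by (simp add: abs_mult)
  moreover have "e / 2 * f \<le> e / 2" using \<open>f < 1\<close> \<open>0 < e\<close> by simp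
  moreover have "\<bar>f * \<sigma> - y\<bar> < e / 2"
    using f(2) sigma_pos unfolding f_def[symmetric] \<theta>_def by (simp add: field_simps abs_mult)
  ultimately have "\<bar>real (a1 * a2 * N) * (\<mu> lo - \<mu> 1) - y\<bar> < e" by linarith
  with g show "\<exists>g \<in> delta_t_S a1 a2 t. dist g y < e" by (auto simp: dist_real_def)
qed

lemma dull_if_irrational:
  assumes "\<rho> \<notin> \<rat>"
  shows "dull a1 a2 t"
proof -
  let ?C = "closure (delta_t_S a1 a2 t)"
  have "closure {0<..<\<sigma>} \<subseteq> ?C"
    using gaps_dense_below_sigma[OF assms] by (intro closure_minimal) auto
  then have "{0..\<sigma>} \<subseteq> ?C" using sigma_pos by simp
  moreover have "{\<sigma>..real a2} \<subseteq> ?C"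
  proof (cases "\<sigma> < real a2")
    case True
    have "closure {\<sigma><..<real a2} \<subseteq> ?C"
      using gaps_dense_above_sigma by (intro closure_minimal) auto
    then show ?thesis using True by simp
  next
    case False
    then show ?thesis using \<open>{0..\<sigma>} \<subseteq> ?C\<close> sigma_pos by auto
  qed
  moreover have "{0..real a2} \<subseteq> {0..\<sigma>} \<union> {\<sigma>..real a2}" by auto
  ultimately show ?thesis unfolding dull_def by blast
qed

section \<open>Rational \<open>\<rho>\<close>: perspicacious parameters\<close>

lemma consecutive_shares_le:
  assumes "consecutive_shares x r1 r2" "r \<in> shares x" "\<mu> r < \<mu> r2"
  shows "\<mu> r \<le> \<mu> r1"
  using assms unfolding consecutive_shares_def by force

lemma Max_shares_ge: "r \<in> shares x \<Longrightarrow> r \<le> Max (shares x)"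
  using finite_shares by simp

lemma Max_shares_in: "r \<in> shares x \<Longrightarrow> Max (shares x) \<in> shares x"
  using finite_shares by (auto intro: Max_in)

text \<open>A step of the progression of shares changes the length by at most \<open>a1\<close>, since
  \<open>\<mu>' \<le> 1 / a2\<close>; a level crossed between two shares is crossed in one such step.\<close>
lemma gap_le_a1_if_level_crossed:
  assumes "consecutive_shares x r1 r2" "0 < x"
    and "u \<in> shares x" "w \<in> shares x" "u \<le> w" "\<mu> u < \<mu> r2" "\<mu> r2 \<le> \<mu> w"
  shows "real x * (\<mu> r2 - \<mu> r1) \<le> real a1"
proof -
  define d where "d = real a1 * real a2 / real x"
  have "0 < d" unfolding d_def using assms(2) by simp
  have "\<And>r r'. r \<in> shares x \<Longrightarrow> r' \<in> shares x \<Longrightarrow> r < r' \<Longrightarrow> r + d \<in> shares x \<and> r + d \<le> r'"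
    using shares_step[OF assms(2)] unfolding d_def by blast
  then obtain r where r: "r \<in> shares x" "r + d \<in> shares x" "\<mu> r < \<mu> r2" "\<mu> r2 \<le> \<mu> (r + d)"
    using step_crossing[OF finite_shares \<open>0 < d\<close> _ assms(3-7)] by blast
  have "0 \<le> r" "r + d \<le> 1" using r(1,2) shares_bounds by auto
  then obtain z where z: "r < z" "z < r + d" "\<mu> (r + d) - \<mu> r = d * d\<mu> z"
    using mu_mvt[of r "r + d"] \<open>0 < d\<close> by auto
  have "d * d\<mu> z \<le> d * (1 / real a2)"
    using dmu_bounds(2)[of z] z \<open>0 \<le> r\<close> \<open>r + d \<le> 1\<close> \<open>0 < d\<close> by (intro mult_left_mono) auto
  then have "\<mu> r2 - \<mu> r1 \<le> d / real a2"
    using z(3) consecutive_shares_le[OF assms(1) r(1,3)] r(4) by simp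
  then have "real x * (\<mu> r2 - \<mu> r1) \<le> real x * (d / real a2)"
    using assms(2) by (intro mult_left_mono) auto
  then show ?thesis unfolding d_def using assms(2) by simp
qed

lemma consecutive_shares_Max_cases:
  assumes "consecutive_shares x r1 r2" "s \<in> shares x" "s \<le> r1"
    and "\<mu> s < \<mu> r2" "\<mu> (Max (shares x)) < \<mu> r2"
  shows "\<mu> r1 = \<mu> s \<or> \<mu> r1 = \<mu> (Max (shares x))"
proof -
  have r1: "r1 \<in> shares x" using assms(1) unfolding consecutive_shares_def by simp
  have "\<mu> s \<le> \<mu> r1" "\<mu> (Max (shares x)) \<le> \<mu> r1"
    using consecutive_shares_le[OF assms(1)] assms(2,4,5) Max_shares_in[OF r1] by auto
  moreover have "\<mu> r1 \<le> max (\<mu> s) (\<mu> (Max (shares x)))"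
    using mu_le_max[of s r1 "Max (shares x)"] shares_bounds assms(2,3)
      Max_shares_ge[OF r1] Max_shares_in[OF r1] by blast
  ultimately show ?thesis by linarith
qed

text \<open>The remaining consecutive lengths: the larger comes from a share \<open>r2 < \<zeta>\<close> whose successor
  lies beyond \<open>\<rho>\<close>, the smaller from that successor or from the largest share.\<close>
abbreviation gap_across_rho :: "nat \<Rightarrow> real \<Rightarrow> real \<Rightarrow> bool" where
  "gap_across_rho x r1 r2 \<equiv> r2 + real a1 * real a2 / real x \<in> shares x \<and>
    \<rho> < r2 + real a1 * real a2 / real x \<and> r2 < \<zeta> \<and> \<mu> (Max (shares x)) < \<mu> r2 \<and>
    (\<mu> r1 = \<mu> (r2 + real a1 * real a2 / real x) \<or> \<mu> r1 = \<mu> (Max (shares x)))"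

lemma consecutive_shares_cases_left:
  assumes "consecutive_shares x r1 r2" "0 < x" "r2 < \<rho>"
  shows "\<sigma> < real x * (\<mu> r2 - \<mu> r1) \<or> gap_across_rho x r1 r2"
proof -
  define d where "d = real a1 * real a2 / real x"
  have "0 < d" unfolding d_def using assms(2) by simp
  have r: "r1 \<in> shares x" "r2 \<in> shares x" "\<mu> r1 < \<mu> r2"
    using assms(1) unfolding consecutive_shares_def by auto
  have "0 \<le> r1" "r1 \<le> 1" "0 \<le> r2" using r shares_subset[of x] by auto
  have "r2 < r1"
  proof (rule ccontr)
    assume "\<not> r2 < r1"
    then have "\<mu> r2 \<le> \<mu> r1" using mu_antimono[of r1 r2] \<open>0 \<le> r1\<close> assms(3) rho by auto
    then show False using r by simp
  qed
  then have step: "r2 + d \<in> shares x" "r2 + d \<le> r1"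
    using shares_step[OF assms(2) r(2,1)] unfolding d_def by auto
  show ?thesis
  proof (cases "r2 + d \<le> \<rho>")
    case True
    have "\<mu> (r2 + d) < \<mu> r2" using mu_strict_antimono[of r2 "r2 + d"] \<open>0 \<le> r2\<close> \<open>0 < d\<close> True rho by simp
    then have "\<mu> (r2 + d) \<le> \<mu> r1" using consecutive_shares_le[OF assms(1) step(1)] by simp
    moreover have "\<mu> r1 \<le> \<mu> (r2 + d)"
      using mu_le_right_of[of "r2 + d" r1] step \<open>0 \<le> r2\<close> \<open>0 < d\<close> True \<open>r1 \<le> 1\<close> by simp
    ultimately have "\<mu> r1 = \<mu> (r2 + d)" by simp
    obtain z where z: "r2 < z" "z < r2 + d" "\<mu> (r2 + d) - \<mu> r2 = d * d\<mu> z"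
      using mu_mvt[of r2 "r2 + d"] \<open>0 \<le> r2\<close> \<open>0 < d\<close> True rho_lt_1 by auto
    have "d\<mu> z < d\<mu> \<rho>" using dmu_strict_mono[of z \<rho>] z True \<open>0 \<le> r2\<close> rho_lt_1 by simp
    then have "real a1 * real a2 * d\<mu> z < real a1 * real a2 * d\<mu> \<rho>" by simp
    then show ?thesis
      using z(3) \<open>\<mu> r1 = \<mu> (r2 + d)\<close> assms(2) unfolding \<sigma>_def d_def by (simp add: algebra_simps)
  next
    case False
    have "\<mu> r2 > 1 / real a2" using mu_gt_level \<open>0 \<le> r2\<close> assms(3) by simp
    moreover have "\<mu> (r2 + d) \<le> 1 / real a2" "\<mu> (Max (shares x)) \<le> 1 / real a2"
      using mu_le_level False step shares_bounds Max_shares_ge[OF r(1)] Max_shares_in[OF r(1)]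
      by (meson le_cases order.trans)+
    ultimately show ?thesis
      using consecutive_shares_Max_cases[OF assms(1) step] step(1) False assms(3) rho
      unfolding d_def by auto
  qed
qed

lemma consecutive_shares_cases_right:
  assumes "consecutive_shares x r1 r2" "0 < x" "\<rho> \<le> r2"
  shows "real x * (\<mu> r2 - \<mu> r1) \<le> real a1 \<or> gap_across_rho x r1 r2"
proof -
  define d where "d = real a1 * real a2 / real x"
  define rt where "rt = Max (shares x)"
  have "0 < d" unfolding d_def using assms(2) by simp
  have r: "r1 \<in> shares x" "r2 \<in> shares x" "\<mu> r1 < \<mu> r2"
    using assms(1) unfolding consecutive_shares_def by auto
  have rt: "rt \<in> shares x" "r1 \<le> rt" "rt \<le> 1"
    unfolding rt_def using Max_shares_in[OF r(1)] Max_shares_ge[OF r(1)] shares_bounds by auto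
  consider "r1 < r2" | "r2 < r1" "\<mu> r2 \<le> \<mu> rt" | "r2 < r1" "\<mu> rt < \<mu> r2"
    using r by (cases r1 r2 rule: linorder_cases) force+
  then show ?thesis
  proof cases
    case 1
    then show ?thesis using gap_le_a1_if_level_crossed[OF assms(1,2), of r1 r2] r by simp
  next
    case 2
    then show ?thesis using gap_le_a1_if_level_crossed[OF assms(1,2), of r1 rt] r rt by simp
  next
    case 3
    have "r2 < \<zeta>"
    proof (rule ccontr)
      assume "\<not> r2 < \<zeta>"
      then have "\<mu> r2 < \<mu> rt" using mu_strict_mono[of r2 rt] 3 rt by simp
      then show False using 3 by simp
    qed
    have next_r2: "r2 + d \<in> shares x" "r2 + d \<le> r1"
      using shares_step[OF assms(2) r(2,1) 3(1)] unfolding d_def by auto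
    have "\<mu> (r2 + d) < \<mu> r2"
    proof (cases "r2 + d \<le> \<zeta>")
      case True
      then show ?thesis
        using mu_strict_antimono[of r2 "r2 + d"] shares_bounds(1)[OF r(2)] \<open>0 < d\<close> by simp
    next
      case False
      then have "\<mu> (r2 + d) \<le> \<mu> rt"
        using mu_strict_mono[of "r2 + d" rt] next_r2 rt by (cases "r2 + d = rt") auto
      then show ?thesis using 3 by simp
    qed
    then show ?thesis
      using consecutive_shares_Max_cases[OF assms(1) next_r2] 3 next_r2(1) \<open>r2 < \<zeta>\<close> assms(3) \<open>0 < d\<close>
      unfolding d_def rt_def by auto
  qed
qed

lemma consecutive_shares_cases:
  assumes "consecutive_shares x r1 r2" "0 < x"
  shows "real x * (\<mu> r2 - \<mu> r1) \<le> real a1 \<or> \<sigma> \<le> real x * (\<mu> r2 - \<mu> r1) \<or>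
    gap_across_rho x r1 r2"
  using consecutive_shares_cases_left[OF assms] consecutive_shares_cases_right[OF assms]
  by (cases "r2 < \<rho>") auto

text \<open>The longest factorization uses fewer than \<open>a2\<close> copies of \<open>a1\<close>, so its length is
  \<open>x / a2 - j a1 / a2\<close> with \<open>j < a2\<close>, up to an error vanishing as \<open>x \<rightarrow> \<infinity>\<close>.\<close>
lemma Max_shares_length_approx:
  assumes "0 < e"
  obtains X0 where "\<And>x. X0 \<le> x \<Longrightarrow> factorizations a1 a2 x \<noteq> {} \<Longrightarrow> \<exists>j < a2.
    real x / real a2 - real j * real a1 / real a2 \<le> real x * \<mu> (Max (shares x)) \<and>
    real x * \<mu> (Max (shares x)) < real x / real a2 - real j * real a1 / real a2 + e"
proof -
  obtain N1 where N1: "\<And>n. n \<ge> N1 \<Longrightarrow> real a2 powr t / n powr (t - 1) < e"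
    using eventually_div_powr_less[OF t_gt_1 assms] by blast
  define X0 where "X0 = nat \<lceil>real a1 * real a2 + real a2 * max N1 1\<rceil> + 1"
  have "\<exists>j < a2. real x / real a2 - real j * real a1 / real a2 \<le> real x * \<mu> (Max (shares x)) \<and>
      real x * \<mu> (Max (shares x)) < real x / real a2 - real j * real a1 / real a2 + e"
    if x0: "X0 \<le> x" "factorizations a1 a2 x \<noteq> {}" for x
  proof -
    have x_big: "real a1 * real a2 + real a2 * max N1 1 < real x"
      using x0(1) unfolding X0_def by linarith
    moreover have "0 \<le> real a1 * real a2 + real a2 * max N1 1" by simp
    ultimately have "0 < x" by linarith
    obtain m0 n0 where mn: "(m0, n0) \<in> factorizations a1 a2 x" "m0 < a2"
      "Max (shares x) = real a2 * real n0 / real x"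
      using Max_shares[OF \<open>0 < x\<close> x0(2)] by blast
    have x: "real x = real m0 * real a1 + real n0 * real a2"
      using mn(1) unfolding factorizations_def by (simp flip: of_nat_mult of_nat_add)
    have L: "real x * \<mu> (Max (shares x)) = tnorm t (real m0, real n0)"
      using tnorm_eq_mu[OF \<open>0 < x\<close>, of m0 n0] mn unfolding factorizations_def by simp
    have "real m0 * real a1 \<le> real a1 * real a2"
      using mn(2) mult_right_mono[of "real m0" "real a2" "real a1"] by (simp add: mult.commute)
    then have "real a2 * max N1 1 < real n0 * real a2" using x x_big by linarith
    then have "max N1 1 < real n0" by (simp add: mult.commute)
    then have "0 < real n0" "N1 \<le> real n0" by auto
    have "real m0 powr t / real n0 powr (t - 1) \<le> real a2 powr t / real n0 powr (t - 1)"
      using mn(2) t_gt_1 by (intro divide_right_mono powr_mono2) auto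
    then have "tnorm t (real m0, real n0) < real n0 + e"
      using tnorm_bounds(2)[of "real m0" "real n0" t] N1[OF \<open>N1 \<le> real n0\<close>] \<open>0 < real n0\<close> t_gt_1
      by simp
    moreover have "real n0 \<le> tnorm t (real m0, real n0)"
      using tnorm_bounds(1)[of "real m0" "real n0" t] \<open>0 < real n0\<close> t_gt_1 by simp
    moreover have "real x / real a2 - real m0 * real a1 / real a2 = real n0"
      using x by (simp add: field_simps)
    ultimately show ?thesis using mn(2) L by (intro exI[of _ m0]) simp
  qed
  then show ?thesis using that by blast
qed

lemma share_near_rho_eventually:
  assumes "0 < \<eta>"
  obtains X0 where "\<And>x r. X0 \<le> x \<Longrightarrow> 0 \<le> r \<Longrightarrow> r \<le> \<zeta> \<Longrightarrow>
    real x / real a2 - real a1 < real x * \<mu> r \<Longrightarrow> r < \<rho> + \<eta>"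
proof -
  define \<eta>' where "\<eta>' = min \<eta> (\<zeta> - \<rho>)"
  have "0 < \<eta>'" "\<rho> + \<eta>' \<le> \<zeta>" unfolding \<eta>'_def using assms rho by auto
  define c where "c = \<mu> \<rho> - \<mu> (\<rho> + \<eta>')"
  have "0 < c" unfolding c_def using mu_strict_antimono[of \<rho> "\<rho> + \<eta>'"] rho \<open>0 < \<eta>'\<close> \<open>\<rho> + \<eta>' \<le> \<zeta>\<close>
    by simp
  define X0 where "X0 = nat \<lceil>real a1 / c\<rceil> + 1"
  have "r < \<rho> + \<eta>"
    if "X0 \<le> x" "0 \<le> r" "r \<le> \<zeta>" "real x / real a2 - real a1 < real x * \<mu> r" for x r
  proof (rule ccontr)
    assume "\<not> r < \<rho> + \<eta>"
    then have "\<mu> r \<le> \<mu> (\<rho> + \<eta>')"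
      using mu_antimono[of "\<rho> + \<eta>'" r] that rho \<open>0 < \<eta>'\<close> unfolding \<eta>'_def by auto
    then have "real x * \<mu> r \<le> real x / real a2 - real x * c"
      unfolding c_def rho(3) by (simp add: mult_left_mono algebra_simps)
    moreover have "real a1 / c < real x" using that(1) unfolding X0_def by linarith
    then have "real a1 < real x * c" using \<open>0 < c\<close> by (simp add: field_simps)
    ultimately show False using that(4) by linarith
  qed
  then show ?thesis using that by blast
qed

text \<open>For \<open>\<rho> = p / q\<close>, a length of a share \<open>r\<close> near \<open>\<rho>\<close> is \<open>x / a2 + \<kappa> |\<mu>'(\<rho>)|\<close> up to a small error,
  where \<open>\<kappa> = x (\<rho> - r) \<in> \<int> / q\<close>, while the longest length is \<open>x / a2 - j a1 / a2\<close> with \<open>j < a2\<close>.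
  The gaps between them lie near the following finite set.\<close>
definition gap_lattice :: "int \<Rightarrow> real set" where
  "gap_lattice q = {of_int k / of_int q * - d\<mu> \<rho> + real j * real a1 / real a2 | k j. j < a2 \<and>
    - (2 * real a1 / - d\<mu> \<rho>) \<le> of_int k / of_int q \<and> of_int k / of_int q \<le> real a1 * real a2}"

lemma finite_gap_lattice:
  assumes "0 < q"
  shows "finite (gap_lattice q)"
proof -
  let ?f = "\<lambda>(k, j). of_int k / of_int q * - d\<mu> \<rho> + real j * real a1 / real a2"
  have "gap_lattice q \<subseteq> ?f ` ({\<lfloor>- (2 * real a1 / - d\<mu> \<rho>) * q\<rfloor>..\<lceil>real a1 * real a2 * q\<rceil>} \<times> {..<a2})"
  proof
    fix v assume "v \<in> gap_lattice q"
    then obtain k j where kj: "j < a2" "- (2 * real a1 / - d\<mu> \<rho>) \<le> of_int k / of_int q"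
      "of_int k / of_int q \<le> real a1 * real a2" "v = ?f (k, j)"
      unfolding gap_lattice_def by auto
    then have "- (2 * real a1 / - d\<mu> \<rho>) * q \<le> k" "k \<le> real a1 * real a2 * q"
      using assms by (simp_all add: field_simps)
    then have "k \<in> {\<lfloor>- (2 * real a1 / - d\<mu> \<rho>) * q\<rfloor>..\<lceil>real a1 * real a2 * q\<rceil>}"
      by (simp add: floor_le_iff le_ceiling_iff)
    then show "v \<in> ?f ` ({\<lfloor>- (2 * real a1 / - d\<mu> \<rho>) * q\<rfloor>..\<lceil>real a1 * real a2 * q\<rceil>} \<times> {..<a2})"
      using kj by force
  qed
  then show ?thesis by (rule finite_subset) auto
qed

lemma top_gap_near_lattice:
  assumes rat: "\<rho> = of_int p / of_int q" "0 < q" and "0 < x" "r \<in> shares x"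
    and "\<rho> - r < real a1 * real a2 / real x"
    and lin: "\<bar>\<mu> r - \<mu> \<rho> - (r - \<rho>) * d\<mu> \<rho>\<bar> \<le> e' * \<bar>r - \<rho>\<bar>"
    and e': "0 \<le> e'" "e' \<le> - d\<mu> \<rho> / 2" "(real a1 * real a2 + 2 * real a1 / - d\<mu> \<rho>) * e' \<le> e / 2"
    and top: "j < a2" "real x / real a2 - real j * real a1 / real a2 \<le> L"
      "L < real x / real a2 - real j * real a1 / real a2 + e / 2" "L < real x * \<mu> r"
  shows "\<exists>v \<in> gap_lattice q. \<bar>real x * \<mu> r - L - v\<bar> < e"
proof -
  define \<beta> where "\<beta> = - d\<mu> \<rho>"
  define C where "C = 2 * real a1 / \<beta>"
  define \<kappa> where "\<kappa> = real x * (\<rho> - r)"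
  have "0 < \<beta>" unfolding \<beta>_def using dmu_rho_neg by simp
  then have "0 < C" unfolding C_def by simp
  have lin_x: "\<bar>real x * \<mu> r - real x / real a2 - \<kappa> * \<beta>\<bar> \<le> e' * \<bar>\<kappa>\<bar>"
  proof -
    have "real x * \<bar>\<mu> r - \<mu> \<rho> - (r - \<rho>) * d\<mu> \<rho>\<bar> \<le> real x * (e' * \<bar>r - \<rho>\<bar>)"
      using lin by (intro mult_left_mono) auto
    moreover have "real x * \<mu> r - real x / real a2 - \<kappa> * \<beta> =
        real x * (\<mu> r - \<mu> \<rho> - (r - \<rho>) * d\<mu> \<rho>)"
      unfolding \<kappa>_def \<beta>_def rho(3) by (simp add: algebra_simps)
    moreover have "\<bar>\<kappa>\<bar> = real x * \<bar>r - \<rho>\<bar>" unfolding \<kappa>_def by (simp add: abs_mult abs_minus_commute)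
    ultimately show ?thesis by (simp add: abs_mult mult.left_commute)
  qed
  have "\<kappa> \<le> real a1 * real a2"
    using assms(5) \<open>0 < x\<close> unfolding \<kappa>_def by (simp add: field_simps)
  moreover have "real j * real a1 / real a2 < real a1" using top(1) by (simp add: field_simps)
  then have "- real a1 < real x * \<mu> r - real x / real a2" using top(2,4) by linarith
  then have "- C \<le> \<kappa>"
    using near_linear_lower_bound[OF lin_x] \<open>0 < \<beta>\<close> e'(2) unfolding C_def \<beta>_def by simp
  moreover have "0 \<le> real a1 * real a2" by simp
  ultimately have "\<bar>\<kappa>\<bar> \<le> real a1 * real a2 + C" using \<open>0 < C\<close> unfolding abs_le_iff by linarith
  then have "e' * \<bar>\<kappa>\<bar> \<le> (real a1 * real a2 + C) * e'"
    using e'(1) by (simp add: mult_left_mono mult.commute)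
  also have "\<dots> \<le> e / 2" using e'(3) unfolding C_def \<beta>_def .
  finally have "e' * \<bar>\<kappa>\<bar> \<le> e / 2" .
  then have "\<bar>real x * \<mu> r - L - (\<kappa> * \<beta> + real j * real a1 / real a2)\<bar> < e"
    using lin_x top(2,3) by (simp add: abs_le_iff abs_less_iff)
  moreover obtain n where "r = real a2 * real n / real x"
    using assms(4) unfolding shares_def by auto
  then have "\<kappa> = of_int (int x * p - q * int a2 * int n) / of_int q"
    unfolding \<kappa>_def rat using \<open>0 < x\<close> \<open>0 < q\<close> by (simp add: field_simps)
  ultimately show ?thesis
    using top(1) \<open>- C \<le> \<kappa>\<close> \<open>\<kappa> \<le> real a1 * real a2\<close>
    unfolding gap_lattice_def C_def \<beta>_def by blast
qed

lemma lattice_tolerance: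
  assumes "0 < e"
  obtains e' where "0 < e'" "e' \<le> - d\<mu> \<rho> / 2"
    "(real a1 * real a2 + 2 * real a1 / - d\<mu> \<rho>) * e' \<le> e / 2" "real a1 * real a2 * e' \<le> e / 2"
proof -
  define K where "K = real a1 * real a2 + 2 * real a1 / - d\<mu> \<rho>"
  define e' where "e' = min (- d\<mu> \<rho> / 2) (e / (2 * K))"
  have "0 < 2 * real a1 / - d\<mu> \<rho>" using dmu_rho_neg by (intro divide_pos_pos) auto
  then have "0 < K" unfolding K_def by (rule add_pos_pos[rotated]) simp
  have "0 < e'" "e' \<le> - d\<mu> \<rho> / 2" unfolding e'_def using dmu_rho_neg assms \<open>0 < K\<close> by auto
  have "K * e' \<le> K * (e / (2 * K))" unfolding e'_def using \<open>0 < K\<close> by (intro mult_left_mono) auto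
  also have "\<dots> = e / 2" using \<open>0 < K\<close> by (simp add: field_simps)
  finally have "K * e' \<le> e / 2" .
  moreover have "0 \<le> 2 * real a1 / - d\<mu> \<rho> * e'"
    using \<open>0 < 2 * real a1 / - d\<mu> \<rho>\<close> \<open>0 < e'\<close> by (intro mult_nonneg_nonneg less_imp_le)
  ultimately have "real a1 * real a2 * e' \<le> e / 2" unfolding K_def distrib_right by linarith
  then show ?thesis using that \<open>0 < e'\<close> \<open>e' \<le> - d\<mu> \<rho> / 2\<close> \<open>K * e' \<le> e / 2\<close>
    unfolding K_def by blast
qed

lemma step_gap_near_sigma:
  assumes "0 < x"
    and "\<bar>\<mu> r - \<mu> (r + real a1 * real a2 / real x) - (r - (r + real a1 * real a2 / real x)) * d\<mu> \<rho>\<bar>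
      \<le> e' * \<bar>r - (r + real a1 * real a2 / real x)\<bar>"
  shows "\<bar>real x * (\<mu> r - \<mu> (r + real a1 * real a2 / real x)) - \<sigma>\<bar> \<le> real a1 * real a2 * e'"
proof -
  let ?d = "real a1 * real a2 / real x"
  have "real x * (\<mu> r - \<mu> (r + ?d)) - \<sigma> = real x * (\<mu> r - \<mu> (r + ?d) - (r - (r + ?d)) * d\<mu> \<rho>)"
    unfolding \<sigma>_def using assms(1) by (simp add: algebra_simps)
  moreover have "\<bar>\<mu> r - \<mu> (r + ?d) - (r - (r + ?d)) * d\<mu> \<rho>\<bar> \<le> e' * ?d"
    using assms(2) by simp
  then have "real x * \<bar>\<mu> r - \<mu> (r + ?d) - (r - (r + ?d)) * d\<mu> \<rho>\<bar> \<le> real x * (e' * ?d)"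
    by (rule mult_left_mono) simp
  ultimately show ?thesis using assms(1) by (simp add: abs_mult ac_simps)
qed

lemma third_case_near_rho_eventually:
  assumes "0 < \<eta>"
  obtains X0 where "\<And>x r1 r2. X0 \<le> x \<Longrightarrow> consecutive_shares x r1 r2 \<Longrightarrow> gap_across_rho x r1 r2 \<Longrightarrow>
    \<bar>r2 - \<rho>\<bar> < \<eta> \<and> \<bar>r2 + real a1 * real a2 / real x - \<rho>\<bar> < \<eta>"
proof -
  obtain X1 where X1: "\<And>x. X1 \<le> x \<Longrightarrow> factorizations a1 a2 x \<noteq> {} \<Longrightarrow> \<exists>j < a2.
      real x / real a2 - real j * real a1 / real a2 \<le> real x * \<mu> (Max (shares x)) \<and>
      real x * \<mu> (Max (shares x)) < real x / real a2 - real j * real a1 / real a2 + 1"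
    using Max_shares_length_approx[of 1] by auto
  obtain X2 where X2: "\<And>x r. X2 \<le> x \<Longrightarrow> 0 \<le> r \<Longrightarrow> r \<le> \<zeta> \<Longrightarrow>
      real x / real a2 - real a1 < real x * \<mu> r \<Longrightarrow> r < \<rho> + \<eta> / 2"
    using share_near_rho_eventually[of "\<eta> / 2"] assms by auto
  define X0 where "X0 = max (max X1 X2) (nat \<lceil>2 * real a1 * real a2 / \<eta>\<rceil> + 1)"
  have "\<bar>r2 - \<rho>\<bar> < \<eta> \<and> \<bar>r2 + real a1 * real a2 / real x - \<rho>\<bar> < \<eta>"
    if "X0 \<le> x" "consecutive_shares x r1 r2" and third: "gap_across_rho x r1 r2" for x r1 r2
  proof -
    have x_big: "2 * real a1 * real a2 / \<eta> < real x" using \<open>X0 \<le> x\<close> unfolding X0_def by linarith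
    moreover have "0 < 2 * real a1 * real a2 / \<eta>" using assms by simp
    ultimately have "0 < x" by simp
    have d: "real a1 * real a2 / real x < \<eta> / 2"
      using x_big assms \<open>0 < x\<close> by (simp add: field_simps)
    have r2: "r2 \<in> shares x" using that(2) unfolding consecutive_shares_def by auto
    then have "factorizations a1 a2 x \<noteq> {}" unfolding shares_def by auto
    then obtain j where "j < a2" "real x / real a2 - real j * real a1 / real a2 \<le> real x * \<mu> (Max (shares x))"
      using X1 \<open>X0 \<le> x\<close> unfolding X0_def by auto
    moreover have "real j * real a1 / real a2 < real a1" using \<open>j < a2\<close> by (simp add: field_simps)
    moreover have "real x * \<mu> (Max (shares x)) < real x * \<mu> r2" using third \<open>0 < x\<close> by simp
    ultimately have "r2 < \<rho> + \<eta> / 2"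
      using X2[of x r2] shares_bounds[OF r2] third \<open>X0 \<le> x\<close> unfolding X0_def by auto
    moreover have "\<rho> < r2 + real a1 * real a2 / real x" using third by simp
    ultimately show ?thesis using d unfolding abs_less_iff by linarith
  qed
  then show ?thesis using that by blast
qed

lemma gaps_eventually_near_lattice:
  assumes "\<rho> = of_int p / of_int q" "0 < q" "0 < e"
  obtains X0 where "\<And>x g. X0 \<le> x \<Longrightarrow> g \<in> delta_t a1 a2 t x \<Longrightarrow>
    g \<le> real a1 \<or> \<sigma> - e \<le> g \<or> (\<exists>v \<in> gap_lattice q. \<bar>g - v\<bar> < e)"
proof -
  obtain e' where e': "0 < e'" "e' \<le> - d\<mu> \<rho> / 2"
    "(real a1 * real a2 + 2 * real a1 / - d\<mu> \<rho>) * e' \<le> e / 2" "real a1 * real a2 * e' \<le> e / 2"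
    using lattice_tolerance[OF assms(3)] by blast
  obtain \<eta> where "0 < \<eta>" and lin: "\<And>r r'. r \<in> {0..1} \<Longrightarrow> r' \<in> {0..1} \<Longrightarrow>
      \<bar>r - \<rho>\<bar> < \<eta> \<Longrightarrow> \<bar>r' - \<rho>\<bar> < \<eta> \<Longrightarrow> \<bar>\<mu> r - \<mu> r' - (r - r') * d\<mu> \<rho>\<bar> \<le> e' * \<bar>r - r'\<bar>"
    using mu_locally_linear[of \<rho> e'] rho rho_lt_1 e'(1) by auto
  obtain X1 where X1: "\<And>x. X1 \<le> x \<Longrightarrow> factorizations a1 a2 x \<noteq> {} \<Longrightarrow> \<exists>j < a2.
      real x / real a2 - real j * real a1 / real a2 \<le> real x * \<mu> (Max (shares x)) \<and>
      real x * \<mu> (Max (shares x)) < real x / real a2 - real j * real a1 / real a2 + e / 2"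
    using Max_shares_length_approx[of "e / 2"] assms(3) by auto
  obtain X2 where X2: "\<And>x r1 r2. X2 \<le> x \<Longrightarrow> consecutive_shares x r1 r2 \<Longrightarrow> gap_across_rho x r1 r2 \<Longrightarrow>
      \<bar>r2 - \<rho>\<bar> < \<eta> \<and> \<bar>r2 + real a1 * real a2 / real x - \<rho>\<bar> < \<eta>"
    using third_case_near_rho_eventually[OF \<open>0 < \<eta>\<close>] by blast
  have "g \<le> real a1 \<or> \<sigma> - e \<le> g \<or> (\<exists>v \<in> gap_lattice q. \<bar>g - v\<bar> < e)"
    if x: "max X1 X2 \<le> x" "g \<in> delta_t a1 a2 t x" for x g
  proof -
    have "0 < x" using x(2) by (cases "x = 0") (auto simp: delta_t_def tlengths_def factorizations_def
      consec_diffs_def)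
    obtain r1 r2 where r: "consecutive_shares x r1 r2" and g: "g = real x * (\<mu> r2 - \<mu> r1)"
      using delta_t_iff[OF \<open>0 < x\<close>] x(2) by blast
    have r2: "r2 \<in> shares x" using r unfolding consecutive_shares_def by auto
    consider "g \<le> real a1 \<or> \<sigma> \<le> g" | "gap_across_rho x r1 r2"
      using consecutive_shares_cases[OF r \<open>0 < x\<close>] g by blast
    then show ?thesis
    proof cases
      case 2
      then have near: "\<bar>r2 - \<rho>\<bar> < \<eta>" "\<bar>r2 + real a1 * real a2 / real x - \<rho>\<bar> < \<eta>"
        using X2[OF _ r] x(1) by auto
      have "factorizations a1 a2 x \<noteq> {}" using r2 unfolding shares_def by auto
      then obtain j where j: "j < a2"
        "real x / real a2 - real j * real a1 / real a2 \<le> real x * \<mu> (Max (shares x))"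
        "real x * \<mu> (Max (shares x)) < real x / real a2 - real j * real a1 / real a2 + e / 2"
        using X1 x(1) by auto
      from 2 show ?thesis
      proof (elim conjE disjE)
        assume "\<mu> r1 = \<mu> (r2 + real a1 * real a2 / real x)"
        then show ?thesis
          using step_gap_near_sigma[OF \<open>0 < x\<close> lin, of r2] near shares_bounds r2 2 e'(4) assms(3)
          unfolding g by auto
      next
        assume "\<mu> r1 = \<mu> (Max (shares x))"
        have "\<bar>\<mu> r2 - \<mu> \<rho> - (r2 - \<rho>) * d\<mu> \<rho>\<bar> \<le> e' * \<bar>r2 - \<rho>\<bar>"
          using lin[of r2 \<rho>] near shares_bounds[OF r2] rho rho_lt_1 \<open>0 < \<eta>\<close> by simp
        then show ?thesis
          using top_gap_near_lattice[OF assms(1,2) \<open>0 < x\<close> r2 _ _ _ e'(2,3) j] 2 e'(1)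
            \<open>\<mu> r1 = \<mu> (Max (shares x))\<close> \<open>0 < x\<close>
          unfolding g by (simp add: right_diff_distrib)
      qed
    qed (use assms(3) in auto)
  qed
  then show ?thesis using that by blast
qed

lemma not_dull_if_rational:
  assumes "\<rho> \<in> \<rat>" "real a1 < \<sigma>"
  shows "\<not> dull a1 a2 t"
proof -
  obtain p q where pq: "0 < q" "\<rho> = of_int p / of_int q" using Rats_cases'[OF assms(1)] by metis
  have "infinite ({real a1<..<\<sigma>} - gap_lattice q)"
    using assms(2) finite_gap_lattice[OF pq(1)] by (intro Diff_infinite_finite) auto
  then obtain c where c: "real a1 < c" "c < \<sigma>" "c \<notin> gap_lattice q"
    by (metis Diff_iff ex_in_conv finite.emptyI greaterThanLessThan_iff)
  let ?F = "insert (real a1) (insert \<sigma> (gap_lattice q))"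
  obtain \<delta> where "0 < \<delta>" and "\<forall>v \<in> ?F. v \<noteq> c \<longrightarrow> \<delta> \<le> dist c v"
    using finite_set_avoid[of ?F c] finite_gap_lattice[OF pq(1)] by auto
  then have \<delta>: "\<And>v. v \<in> ?F \<Longrightarrow> \<delta> \<le> \<bar>c - v\<bar>" using c by (force simp: dist_real_def)
  obtain X0 where X0: "\<And>x g. X0 \<le> x \<Longrightarrow> g \<in> delta_t a1 a2 t x \<Longrightarrow>
      g \<le> real a1 \<or> \<sigma> - \<delta> / 2 \<le> g \<or> (\<exists>v \<in> gap_lattice q. \<bar>g - v\<bar> < \<delta> / 2)"
    using gaps_eventually_near_lattice[OF pq(2,1), of "\<delta> / 2"] \<open>0 < \<delta>\<close> by auto
  have "\<delta> \<le> c - real a1" "\<delta> \<le> \<sigma> - c" using \<delta>[of "real a1"] \<delta>[of \<sigma>] c by auto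
  have "ball c (\<delta> / 2) \<inter> delta_t_S a1 a2 t \<subseteq> (\<Union>x<X0. delta_t a1 a2 t x)"
  proof
    fix g assume "g \<in> ball c (\<delta> / 2) \<inter> delta_t_S a1 a2 t"
    then obtain x where g: "\<bar>g - c\<bar> < \<delta> / 2" "g \<in> delta_t a1 a2 t x"
      unfolding delta_t_S_def by (auto simp: dist_real_def abs_minus_commute)
    have "\<not> X0 \<le> x"
    proof
      assume "X0 \<le> x"
      then consider "g \<le> real a1" | "\<sigma> - \<delta> / 2 \<le> g" | v where "v \<in> gap_lattice q" "\<bar>g - v\<bar> < \<delta> / 2"
        using X0 g(2) by blast
      then show False
      proof cases
        case 3
        then have "\<bar>c - v\<bar> < \<delta>" using g(1) by linarith
        then show False using \<delta> 3(1) by force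
      qed (use g(1) \<open>\<delta> \<le> c - real a1\<close> \<open>\<delta> \<le> \<sigma> - c\<close> in linarith)+
    qed
    then show "g \<in> (\<Union>x<X0. delta_t a1 a2 t x)" using g(2) by auto
  qed
  then have "finite (ball c (\<delta> / 2) \<inter> delta_t_S a1 a2 t)"
    using finite_delta_t by (auto intro: finite_subset)
  then obtain y where y: "y \<in> ball c (\<delta> / 2)" "y \<notin> closure (delta_t_S a1 a2 t)"
    using not_in_closure_if_finite_ball_inter \<open>0 < \<delta>\<close> by (metis half_gt_zero)
  have "\<bar>y - c\<bar> < \<delta> / 2" using y(1) by (simp add: dist_real_def abs_minus_commute)
  then have "y \<in> {0..real a2}"
    using \<open>\<delta> \<le> c - real a1\<close> \<open>\<delta> \<le> \<sigma> - c\<close> sigma_le_a2 \<open>0 < \<delta>\<close> unfolding abs_less_iff by simp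
  then show ?thesis using y(2) unfolding dull_def by blast
qed

section \<open>Dependence on \<open>t\<close>\<close>

lemma r0_bounds: "0 < r0 a1 a2 t" "r0 a1 a2 t < 1"
  using r0_eq rho rho_lt_1 by auto

lemma mu_r0_cases:
  assumes "0 \<le> r" "r < 1"
  shows "r < r0 a1 a2 t \<Longrightarrow> 1 / real a2 < mu a1 a2 r t"
    and "r = r0 a1 a2 t \<Longrightarrow> mu a1 a2 r t = 1 / real a2"
    and "r0 a1 a2 t < r \<Longrightarrow> mu a1 a2 r t < 1 / real a2"
  using assms mu_eq[of r] mu_gt_level[of r] mu_lt_level[of r] rho(3) unfolding r0_eq by auto

end

lemma mu_less_inverse_iff:
  assumes "0 < a1" "0 < a2" "0 \<le> r" "r \<le> 1" "0 < t"
  shows "mu a1 a2 r t < 1 / real a2 \<longleftrightarrow> (real a2 * (1 - r) / real a1) powr t + r powr t < 1"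
proof -
  have "real a2 * mu a1 a2 r t = tnorm t (real a2 * (1 - r) / real a1, r)"
    unfolding mu_def using tnorm_scale[of t "real a2" "(1 - r) / real a1" "r / real a2"] assms by simp
  then show ?thesis using tnorm_less_one_iff[of t] assms by (simp add: field_simps)
qed

lemma mu_eq_inverse_iff:
  assumes "0 < a1" "0 < a2" "0 \<le> r" "r \<le> 1" "0 < t"
  shows "mu a1 a2 r t = 1 / real a2 \<longleftrightarrow> (real a2 * (1 - r) / real a1) powr t + r powr t = 1"
proof -
  have "real a2 * mu a1 a2 r t = tnorm t (real a2 * (1 - r) / real a1, r)"
    unfolding mu_def using tnorm_scale[of t "real a2" "(1 - r) / real a1" "r / real a2"] assms by simp
  then show ?thesis using tnorm_eq_one_iff[of t] assms by (simp add: field_simps)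
qed

lemma tnorm_semigroupI:
  "1 < a1 \<Longrightarrow> a1 < a2 \<Longrightarrow> coprime a1 a2 \<Longrightarrow> 1 < t \<Longrightarrow> tnorm_semigroup a1 a2 t"
  by (simp add: tnorm_semigroup_def)

lemma r0_strict_antimono:
  assumes "1 < a1" "a1 < a2" "coprime a1 a2" "1 < t" "t < t'"
  shows "r0 a1 a2 t' < r0 a1 a2 t"
proof -
  interpret T: tnorm_semigroup a1 a2 t using assms by (intro tnorm_semigroupI) auto
  interpret T': tnorm_semigroup a1 a2 t' using assms by (intro tnorm_semigroupI) auto
  define r where "r = r0 a1 a2 t"
  define u where "u = real a2 * (1 - r) / real a1"
  have r: "0 < r" "r < 1" unfolding r_def using T.r0_bounds by auto
  then have "0 < u" unfolding u_def using assms by simp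
  have "u powr t + r powr t = 1"
    using T.mu_r0_cases(2)[of r] mu_eq_inverse_iff[of a1 a2 r t] r assms unfolding r_def u_def by simp
  have "u \<le> 1"
  proof (rule ccontr)
    assume "\<not> u \<le> 1"
    then have "1 < u powr t" using powr_less_mono2[of t 1 u] assms(4) by simp
    moreover have "0 < r powr t" using r by simp
    ultimately show False using \<open>u powr t + r powr t = 1\<close> by linarith
  qed
  then have "u powr t' \<le> u powr t" using \<open>0 < u\<close> assms by (intro powr_mono') auto
  moreover have "r powr t' < r powr t" using r assms by (intro powr_less_mono') auto
  ultimately have "mu a1 a2 r t' < 1 / real a2"
    using mu_less_inverse_iff[of a1 a2 r t'] \<open>u powr t + r powr t = 1\<close> r assms unfolding u_def by simp
  show ?thesis
  proof (rule ccontr)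
    assume "\<not> r0 a1 a2 t' < r0 a1 a2 t"
    then consider "r < r0 a1 a2 t'" | "r = r0 a1 a2 t'" unfolding r_def by linarith
    then show False
      using T'.mu_r0_cases(1,2)[of r] r \<open>mu a1 a2 r t' < 1 / real a2\<close> by cases auto
  qed
qed

lemma r0_attains:
  assumes "1 < a1" "a1 < a2" "coprime a1 a2" "1 < t1" "t1 < t2"
    and q: "r0 a1 a2 t2 < q" "q < r0 a1 a2 t1"
  obtains t where "t1 < t" "t < t2" "r0 a1 a2 t = q"
proof -
  interpret T1: tnorm_semigroup a1 a2 t1 using assms by (intro tnorm_semigroupI) auto
  interpret T2: tnorm_semigroup a1 a2 t2 using assms by (intro tnorm_semigroupI) auto
  have "0 < q" "q < 1" using q T1.r0_bounds T2.r0_bounds by auto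
  have "0 < ((1 - q) / real a1) powr s + (q / real a2) powr s" for s
    using \<open>0 < q\<close> \<open>q < 1\<close> assms(1,2) by (intro add_pos_pos) auto
  then have "continuous_on {t1..t2} (\<lambda>s. mu a1 a2 q s)"
    unfolding mu_def tnorm_def using \<open>0 < q\<close> \<open>q < 1\<close> assms(1,2,4)
    by (intro continuous_intros) (auto simp: less_imp_neq[symmetric])
  moreover have "mu a1 a2 q t2 < 1 / real a2" "1 / real a2 < mu a1 a2 q t1"
    using T1.mu_r0_cases T2.mu_r0_cases \<open>0 < q\<close> \<open>q < 1\<close> q by auto
  ultimately obtain s where s: "t1 \<le> s" "s \<le> t2" "mu a1 a2 q s = 1 / real a2"
    using IVT2'[of "\<lambda>s. mu a1 a2 q s" t2 "1 / real a2" t1] assms(5) by force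
  then have "t1 < s" "s < t2"
    using \<open>mu a1 a2 q t2 < 1 / real a2\<close> \<open>1 / real a2 < mu a1 a2 q t1\<close> by (auto simp: le_less)
  interpret S: tnorm_semigroup a1 a2 s using assms \<open>t1 < s\<close> by (intro tnorm_semigroupI) auto
  have "r0 a1 a2 s = q"
    using S.mu_r0_cases[of q] s(3) \<open>0 < q\<close> \<open>q < 1\<close> by (cases "q < r0 a1 a2 s"; cases "r0 a1 a2 s < q") auto
  then show ?thesis using that \<open>t1 < s\<close> \<open>s < t2\<close> by blast
qed

lemma sigma_gt_a1_eventually:
  assumes "1 < a1" "a1 < a2" "coprime a1 a2"
  obtains T where "1 \<le> T" "\<And>t. T < t \<Longrightarrow> real a1 < tnorm_semigroup.\<sigma> a1 a2 t"
proof -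
  interpret T2: tnorm_semigroup a1 a2 2 using assms by (intro tnorm_semigroupI) auto
  define \<beta> where "\<beta> = r0 a1 a2 2"
  define \<kappa> where "\<kappa> = (real a2 - real a1) / (real a1 + real a2)"
  have "0 < \<beta>" "\<beta> < 1" unfolding \<beta>_def using T2.r0_bounds by auto
  have "0 < \<kappa>" unfolding \<kappa>_def using assms by simp
  obtain n where n: "\<beta> ^ n < \<kappa>"
    using real_arch_pow_inv[OF \<open>0 < \<kappa>\<close> \<open>\<beta> < 1\<close>] by blast
  have "real a1 < tnorm_semigroup.\<sigma> a1 a2 t" if "max 2 (real n + 1) < t" for t
  proof -
    interpret T: tnorm_semigroup a1 a2 t using assms that by (intro tnorm_semigroupI) auto
    have "T.\<rho> < \<beta>" using r0_strict_antimono[of a1 a2 2 t] assms that unfolding \<beta>_def T.r0_eq by simp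
    then have "T.\<rho> powr (t - 1) \<le> \<beta> powr (t - 1)" using T.rho that by (intro powr_mono2) auto
    also have "\<dots> \<le> \<beta> powr real n" using \<open>0 < \<beta>\<close> \<open>\<beta> < 1\<close> that by (intro powr_mono') auto
    also have "\<dots> < \<kappa>" using n \<open>0 < \<beta>\<close> by (simp add: powr_realpow)
    finally have "(real a1 + real a2) * T.\<rho> powr (t - 1) < real a2 - real a1"
      using assms unfolding \<kappa>_def by (simp add: field_simps)
    then show ?thesis using T.sigma_lower_bound by linarith
  qed
  then show ?thesis using that[of "max 2 (real n + 1)"] by simp
qed

lemma perspicacious_imp_r0_rat:
  assumes "1 < a1" "a1 < a2" "coprime a1 a2" "perspicacious a1 a2 t"
  shows "1 \<le> t \<and> r0 a1 a2 t \<in> \<rat>"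
proof -
  have "1 < t" "\<not> dull a1 a2 t" using assms(4) unfolding perspicacious_def by auto
  interpret T: tnorm_semigroup a1 a2 t using assms \<open>1 < t\<close> by (intro tnorm_semigroupI) auto
  show ?thesis using T.dull_if_irrational \<open>\<not> dull a1 a2 t\<close> \<open>1 < t\<close> unfolding T.r0_eq by auto
qed

lemma countable_perspicacious:
  assumes "1 < a1" "a1 < a2" "coprime a1 a2"
  shows "countable {t. perspicacious a1 a2 t}"
proof (rule countable_image_inj_on)
  show "countable ((\<lambda>t. r0 a1 a2 t) ` {t. perspicacious a1 a2 t})"
    using perspicacious_imp_r0_rat[OF assms] countable_rat by (blast intro: countable_subset)
  show "inj_on (\<lambda>t. r0 a1 a2 t) {t. perspicacious a1 a2 t}"
  proof (rule inj_onI)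
    fix t t' assume "t \<in> {t. perspicacious a1 a2 t}" "t' \<in> {t. perspicacious a1 a2 t}"
      "r0 a1 a2 t = r0 a1 a2 t'"
    then show "t = t'" using r0_strict_antimono[OF assms, of t t'] r0_strict_antimono[OF assms, of t' t]
      unfolding perspicacious_def by (cases t t' rule: linorder_cases) auto
  qed
qed

text \<open>Where \<open>\<sigma> > a1\<close>, every rational value of the strictly decreasing continuous \<open>r0\<close> yields a
  perspicacious parameter.\<close>
lemma perspicacious_dense_ray:
  assumes "1 < a1" "a1 < a2" "coprime a1 a2"
  obtains T where "{T<..} \<subseteq> closure {t. perspicacious a1 a2 t}"
proof -
  obtain T where "1 \<le> T" and T: "\<And>t. T < t \<Longrightarrow> real a1 < tnorm_semigroup.\<sigma> a1 a2 t"
    using sigma_gt_a1_eventually[OF assms] by blast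
  have "\<exists>t \<in> {t. perspicacious a1 a2 t}. dist t y < e" if "T < y" "0 < e" for y e
  proof -
    define t1 where "t1 = max ((T + y) / 2) (y - e / 2)"
    define t2 where "t2 = y + e / 2"
    have "T < t1" "t1 < t2" "1 < t1"
      unfolding t1_def t2_def using that \<open>1 \<le> T\<close> by (auto simp: less_max_iff_disj)
    then obtain q where "q \<in> \<rat>" "r0 a1 a2 t2 < q" "q < r0 a1 a2 t1"
      using r0_strict_antimono[OF assms] Rats_dense_in_real by metis
    then obtain t where t: "t1 < t" "t < t2" "r0 a1 a2 t = q"
      using r0_attains[OF assms \<open>1 < t1\<close> \<open>t1 < t2\<close>] by metis
    interpret T: tnorm_semigroup a1 a2 t
      using assms \<open>1 < t1\<close> t by (intro tnorm_semigroupI) auto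
    have "perspicacious a1 a2 t"
      using T.not_dull_if_rational T[of t] \<open>T < t1\<close> t \<open>q \<in> \<rat>\<close> \<open>1 < t1\<close>
      unfolding perspicacious_def T.r0_eq by auto
    moreover have "dist t y < e" using t that unfolding t1_def t2_def dist_real_def by auto
    ultimately show ?thesis by blast
  qed
  then have "{T<..} \<subseteq> closure {t. perspicacious a1 a2 t}" by (auto simp: closure_approachable)
  then show ?thesis using that by blast
qed

theorem theorem1:
  fixes a1 a2 :: nat
  assumes "1 < a1" and "a1 < a2" and "coprime a1 a2"
  shows "{t. perspicacious a1 a2 t} \<subseteq> {t. 1 \<le> t \<and> r0 a1 a2 t \<in> \<rat>}
         \<and> countable {t. perspicacious a1 a2 t}
         \<and> (\<exists>T. {T<..} \<subseteq> closure {t. perspicacious a1 a2 t})"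
  using perspicacious_imp_r0_rat[OF assms] countable_perspicacious[OF assms]
    perspicacious_dense_ray[OF assms] by blast

end
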